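(* Let $n\ge2$, $\alpha=n-2$ and $l,m\in\mathbb Z_{\ge0}$. Then $$h_n\bigl(R^{(\alpha)}_{l,m}(z_n,w_n;q^2)^*\,R^{(\alpha)}_{l,m}(z_n,w_n;q^2)\bigr)=c^{(\alpha)}_{l,m}:=\frac{(1-q^{2(\alpha+1)})q^{2m(\alpha+1)}}{1-q^{2(\alpha+l+m+1)}}\cdot\frac{(q^2;q^2)_l(q^2;q^2)_m}{(q^{2(\alpha+1)};q^2)_l(q^{2(\alpha+1)};q^2)_m}.$$
   Context: Fix $0<q<1$, $n\ge2$. $\mathcal Z_n$ is the unital complex $*$-algebra generated by $z_1,\dots,z_n,w_1,\dots,w_n$ subject to $z_iz_j=qz_jz_i$ $(i<j)$, $w_jw_i=qw_iw_j$ $(i<j)$, $w_iz_j=qz_jw_i$ $(i\ne j)$, $w_iz_i=z_iw_i+(1-q^2)\sum_{k<i}z_kw_k$, with involution $z_i^*=w_i$. $z^\lambda w^\mu=z_1^{\lambda_1}\cdots z_n^{\lambda_n}w_n^{\mu_n}\cdots w_1^{\mu_1}$, $|\lambda|=\sum\lambda_i$, $Q_i=\sum_{k=1}^iz_kw_k$; $Q_n$ is central and $\widetilde{\mathcal Z}_n=\mathcal Z_n/(Q_n-1)$. $(a;p)_k=\prod_{j=0}^{k-1}(1-ap^j)$. $h_n$ is the linear functional on $\widetilde{\mathcal Z}_n$ with $h_n(z^\lambda w^\mu)=\delta_{\lambda\mu}q^{-2((n-1)\lambda_1+(n-2)\lambda_2+\cdots+\lambda_{n-1})}\frac{(q^{-2};q^{-2})_{\lambda_1}\cdots(q^{-2};q^{-2})_{\lambda_n}(q^{-2};q^{-2})_{n-1}}{(q^{-2};q^{-2})_{|\lambda|+n-1}}$.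 Little $q$-Jacobi: $P^{(\alpha,\beta)}_m(x;p)=\sum_{k=0}^m\frac{(p^{-m};p)_k(p^{\alpha+\beta+m+1};p)_k}{(p^{\alpha+1};p)_k(p;p)_k}(px)^k$. $q$-disk polynomials in $\widetilde{\mathcal Z}_n$: $R^{(\alpha)}_{l,m}(z_n,w_n;q^2)=z_n^{l-m}P^{(\alpha,l-m)}_m(Q_{n-1};q^2)$ if $l\ge m$ and $=P^{(\alpha,m-l)}_l(Q_{n-1};q^2)w_n^{m-l}$ if $l\le m$. *)

theory Defs
  imports Complex_Main "HOL-Library.Function_Algebras"
begin

text \<open>Noncommutative polynomials in the letters z_i = (False,i), w_i = (True,i):
  an element is a coefficient function on words (lists of letters).
  Addition/subtraction are pointwise (Function_Algebras); multiplication is concatenation-convolution.\<close>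

type_synonym ncp = "(bool \<times> nat) list \<Rightarrow> complex"

definition ncmul :: "ncp \<Rightarrow> ncp \<Rightarrow> ncp" where
  "ncmul p r = (\<lambda>u. \<Sum>k\<le>length u. p (take k u) * r (drop k u))"

definition ncone :: ncp where
  "ncone = (\<lambda>u. if u = [] then 1 else 0)"

definition ncword :: "(bool \<times> nat) list \<Rightarrow> ncp" where
  "ncword v = (\<lambda>u. if u = v then 1 else 0)"

definition ncsmult :: "complex \<Rightarrow> ncp \<Rightarrow> ncp" where
  "ncsmult c p = (\<lambda>u. c * p u)"

definition ncstar :: "ncp \<Rightarrow> ncp" where
  "ncstar p = (\<lambda>u. cnj (p (rev (map (\<lambda>(b, i). (\<not> b, i)) u))))"

fun ncpow :: "ncp \<Rightarrow> nat \<Rightarrow> ncp" where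
  "ncpow x 0 = ncone"
| "ncpow x (Suc k) = ncmul x (ncpow x k)"

definition zg :: "nat \<Rightarrow> ncp" where "zg i = ncword [(False, i)]"
definition wg :: "nat \<Rightarrow> ncp" where "wg i = ncword [(True, i)]"

definition Qsum :: "nat \<Rightarrow> ncp" where
  "Qsum i = (\<Sum>k\<in>{1..i}. ncmul (zg k) (wg k))"

definition ncpoly :: "nat \<Rightarrow> ncp \<Rightarrow> bool" where
  "ncpoly n p \<longleftrightarrow> finite {u. p u \<noteq> 0} \<and> (\<forall>u. p u \<noteq> 0 \<longrightarrow> (\<forall>x\<in>set u. snd x \<in> {1..n}))"

text \<open>Two-sided ideal of the free algebra generated by the defining relations of Z_n
  together with Q_n - 1; the quotient is \<open>Z_n/(Q_n - 1)\<close>.\<close>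
inductive_set Zrel_ideal :: "real \<Rightarrow> nat \<Rightarrow> ncp set" for q :: real and n :: nat where
  zz: "1 \<le> i \<Longrightarrow> i < j \<Longrightarrow> j \<le> n \<Longrightarrow>
        ncmul (zg i) (zg j) - ncsmult (of_real q) (ncmul (zg j) (zg i)) \<in> Zrel_ideal q n"
| ww: "1 \<le> i \<Longrightarrow> i < j \<Longrightarrow> j \<le> n \<Longrightarrow>
        ncmul (wg j) (wg i) - ncsmult (of_real q) (ncmul (wg i) (wg j)) \<in> Zrel_ideal q n"
| wz: "1 \<le> i \<Longrightarrow> i \<le> n \<Longrightarrow> 1 \<le> j \<Longrightarrow> j \<le> n \<Longrightarrow> i \<noteq> j \<Longrightarrow>
        ncmul (wg i) (zg j) - ncsmult (of_real q) (ncmul (zg j) (wg i)) \<in> Zrel_ideal q n"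
| wzi: "1 \<le> i \<Longrightarrow> i \<le> n \<Longrightarrow>
        ncmul (wg i) (zg i) - ncmul (zg i) (wg i) - ncsmult (of_real (1 - q^2)) (Qsum (i - 1))
          \<in> Zrel_ideal q n"
| Qn: "Qsum n - ncone \<in> Zrel_ideal q n"
| add: "a \<in> Zrel_ideal q n \<Longrightarrow> b \<in> Zrel_ideal q n \<Longrightarrow> a + b \<in> Zrel_ideal q n"
| smult: "a \<in> Zrel_ideal q n \<Longrightarrow> ncsmult c a \<in> Zrel_ideal q n"
| lmul: "a \<in> Zrel_ideal q n \<Longrightarrow> 1 \<le> i \<Longrightarrow> i \<le> n \<Longrightarrow> ncmul (ncword [(b, i)]) a \<in> Zrel_ideal q n"
| rmul: "a \<in> Zrel_ideal q n \<Longrightarrow> 1 \<le> i \<Longrightarrow> i \<le> n \<Longrightarrow> ncmul a (ncword [(b, i)]) \<in> Zrel_ideal q n"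

definition qpoch :: "real \<Rightarrow> real \<Rightarrow> nat \<Rightarrow> real" where
  "qpoch a p k = (\<Prod>j<k. 1 - a * p ^ j)"

text \<open>The word of z^lam w^mu = z_1^{lam_1}...z_n^{lam_n} w_n^{mu_n}...w_1^{mu_1}\<close>
definition zw_word :: "nat \<Rightarrow> (nat \<Rightarrow> nat) \<Rightarrow> (nat \<Rightarrow> nat) \<Rightarrow> (bool \<times> nat) list" where
  "zw_word n lam mu =
     concat (map (\<lambda>i. replicate (lam i) (False, i)) [1..<n+1]) @
     concat (map (\<lambda>i. replicate (mu i) (True, i)) (rev [1..<n+1]))"

text \<open>Value of h_n on z^lam w^lam.\<close>
definition hval :: "real \<Rightarrow> nat \<Rightarrow> (nat \<Rightarrow> nat) \<Rightarrow> real" where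
  "hval q n lam =
     (1 / q^2) ^ (\<Sum>i\<in>{1..n-1}. (n - i) * lam i) *
     ((\<Prod>i\<in>{1..n}. qpoch (1 / q^2) (1 / q^2) (lam i)) * qpoch (1 / q^2) (1 / q^2) (n - 1))
     / qpoch (1 / q^2) (1 / q^2) ((\<Sum>i\<in>{1..n}. lam i) + n - 1)"

definition is_hn :: "real \<Rightarrow> nat \<Rightarrow> (ncp \<Rightarrow> complex) \<Rightarrow> bool" where
  "is_hn q n h \<longleftrightarrow>
     (\<forall>p r. ncpoly n p \<longrightarrow> ncpoly n r \<longrightarrow> h (p + r) = h p + h r) \<and>
     (\<forall>c p. ncpoly n p \<longrightarrow> h (ncsmult c p) = c * h p) \<and>
     (\<forall>a\<in>Zrel_ideal q n. h a = 0) \<and>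
     (\<forall>lam mu. h (ncword (zw_word n lam mu)) =
        (if (\<forall>i\<in>{1..n}. lam i = mu i) then of_real (hval q n lam) else 0))"

definition lqj_coeff :: "nat \<Rightarrow> nat \<Rightarrow> nat \<Rightarrow> real \<Rightarrow> nat \<Rightarrow> real" where
  "lqj_coeff al be m p k =
     qpoch (1 / p ^ m) p k * qpoch (p ^ (al + be + m + 1)) p k
     / (qpoch (p ^ (al + 1)) p k * qpoch p p k)"

definition lqJ :: "nat \<Rightarrow> nat \<Rightarrow> nat \<Rightarrow> real \<Rightarrow> ncp \<Rightarrow> ncp" where
  "lqJ al be m p x = (\<Sum>k\<le>m. ncsmult (of_real (lqj_coeff al be m p k * p ^ k)) (ncpow x k))"

definition qdisk :: "nat \<Rightarrow> real \<Rightarrow> nat \<Rightarrow> nat \<Rightarrow> ncp" where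
  "qdisk n q l m =
     (if m \<le> l then ncmul (ncpow (zg n) (l - m)) (lqJ (n - 2) (l - m) m (q^2) (Qsum (n - 1)))
      else ncmul (lqJ (n - 2) (m - l) l (q^2) (Qsum (n - 1))) (ncpow (wg n) (m - l)))"

definition cval :: "nat \<Rightarrow> real \<Rightarrow> nat \<Rightarrow> nat \<Rightarrow> real" where
  "cval al q l m =
     (1 - q ^ (2 * (al + 1))) * q ^ (2 * m * (al + 1)) / (1 - q ^ (2 * (al + l + m + 1))) *
     (qpoch (q^2) (q^2) l * qpoch (q^2) (q^2) m
      / (qpoch (q ^ (2 * (al + 1))) (q^2) l * qpoch (q ^ (2 * (al + 1))) (q^2) m))"

end

(*
  Modulo the relations, z = z_n, w = w_n and Q = Q_(n-1) satisfy z w = 1 - Q, w z = 1 - q^2 Q and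
  F(Q) z = z F(q^2 Q). Hence R^* R reduces to a polynomial in Q, namely P(Q) W_d(Q) P(Q) for l >= m,
  where P is the little q-Jacobi polynomial and W_d(x) = (q^2 x; q^2)_d. Evaluating h_n on the words
  z^j w^j shows that on polynomials in Q it is the Jackson integral F |-> (1 - p^a) sum_k p^(a k) F(p^k),
  with p = q^2 and a = n - 1. The claim is then the orthogonality and the norm of the little q-Jacobi
  polynomials for this measure, both obtained from the q-Chu-Vandermonde sum. For l < m one moves
  z^d through P(Q)^2 and rescales the Jackson integral to land in the first case.
*)
theory Submission
  imports Defs "HOL-Computational_Algebra.Polynomial"
begin

section \<open>The free algebra of noncommutative polynomials\<close>

definition splits :: "'a list \<Rightarrow> ('a list \<times> 'a list) set" where
  "splits u = {(x, y). x @ y = u}"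

lemma splits_eq_image: "splits u = (\<lambda>k. (take k u, drop k u)) ` {..length u}"
proof (rule set_eqI, rule iffI)
  fix xy assume "xy \<in> splits u"
  then obtain x y where "xy = (x, y)" "x @ y = u" by (auto simp: splits_def)
  then show "xy \<in> (\<lambda>k. (take k u, drop k u)) ` {..length u}"
    by (intro image_eqI[where x="length x"]) auto
qed (auto simp: splits_def)

lemma finite_splits [simp]: "finite (splits u)"
  by (simp add: splits_eq_image)

lemma ncmul_splits: "ncmul p r u = (\<Sum>xy\<in>splits u. p (fst xy) * r (snd xy))"
  unfolding ncmul_def splits_def
  by (rule sum.reindex_bij_witness[where i="\<lambda>xy. length (fst xy)" and j="\<lambda>k. (take k u, drop k u)"])
     auto

lemma ncmul_assoc: "ncmul (ncmul p r) s = ncmul p (ncmul r s)"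
proof
  fix u
  have "ncmul (ncmul p r) s u =
      (\<Sum>az\<in>splits u. \<Sum>xy\<in>splits (fst az). p (fst xy) * r (snd xy) * s (snd az))"
    by (simp add: ncmul_splits sum_distrib_right)
  also have "\<dots> = (\<Sum>w\<in>Sigma (splits u) (\<lambda>az. splits (fst az)).
      p (fst (snd w)) * r (snd (snd w)) * s (snd (fst w)))"
    by (subst sum.Sigma) (auto simp: case_prod_unfold)
  also have "\<dots> = (\<Sum>w\<in>Sigma (splits u) (\<lambda>xb. splits (snd xb)).
      p (fst (fst w)) * r (fst (snd w)) * s (snd (snd w)))"
    by (rule sum.reindex_bij_witness[where i="\<lambda>((x, b), (y, z)). ((x @ y, z), (x, y))"
          and j="\<lambda>((a, z), (x, y)). ((x, y @ z), (y, z))"]) (auto simp: splits_def)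
  also have "\<dots> = (\<Sum>xb\<in>splits u. \<Sum>yz\<in>splits (snd xb). p (fst xb) * (r (fst yz) * s (snd yz)))"
    by (subst sum.Sigma) (auto simp: case_prod_unfold mult.assoc)
  also have "\<dots> = ncmul p (ncmul r s) u"
    by (simp add: ncmul_splits sum_distrib_left)
  finally show "ncmul (ncmul p r) s u = ncmul p (ncmul r s) u" .
qed

lemma ncmul_add_left: "ncmul (a + b) c = ncmul a c + ncmul b c"
  by (rule ext) (simp add: ncmul_def distrib_right sum.distrib)

lemma ncmul_add_right: "ncmul c (a + b) = ncmul c a + ncmul c b"
  by (rule ext) (simp add: ncmul_def distrib_left sum.distrib)

lemma ncmul_diff_left: "ncmul (a - b) c = ncmul a c - ncmul b c"
  by (rule ext) (simp add: ncmul_def left_diff_distrib sum_subtractf)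

lemma ncmul_diff_right: "ncmul c (a - b) = ncmul c a - ncmul c b"
  by (rule ext) (simp add: ncmul_def right_diff_distrib sum_subtractf)

lemma ncmul_smult_left: "ncmul (ncsmult k a) c = ncsmult k (ncmul a c)"
  by (rule ext) (simp add: ncmul_def ncsmult_def sum_distrib_left mult.assoc)

lemma ncmul_smult_right: "ncmul c (ncsmult k a) = ncsmult k (ncmul c a)"
  by (rule ext) (simp add: ncmul_def ncsmult_def sum_distrib_left mult.left_commute)

lemma ncmul_zero_left [simp]: "ncmul 0 c = 0"
  by (rule ext) (simp add: ncmul_def)

lemma ncmul_zero_right [simp]: "ncmul c 0 = 0"
  by (rule ext) (simp add: ncmul_def)

lemma ncmul_sum_right: "ncmul c (\<Sum>i\<in>S. f i) = (\<Sum>i\<in>S. ncmul c (f i))"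
  using sum_comp_morphism[where h="ncmul c" and g=f and A=S] by (simp add: ncmul_add_right comp_def)

lemma ncmul_sum_left: "ncmul (\<Sum>i\<in>S. f i) c = (\<Sum>i\<in>S. ncmul (f i) c)"
  using sum_comp_morphism[where h="\<lambda>x. ncmul x c" and g=f and A=S] by (simp add: ncmul_add_left comp_def)

lemma ncmul_one_left [simp]: "ncmul ncone c = c"
proof
  fix u
  have "ncmul ncone c u = (\<Sum>k\<le>length u. if k = 0 then c u else 0)"
    unfolding ncmul_def ncone_def by (rule sum.cong) auto
  then show "ncmul ncone c u = c u" by simp
qed

lemma ncmul_one_right [simp]: "ncmul c ncone = c"
proof
  fix u
  have "ncmul c ncone u = (\<Sum>k\<le>length u. if k = length u then c u else 0)"
    unfolding ncmul_def ncone_def by (rule sum.cong) auto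
  then show "ncmul c ncone u = c u" by simp
qed

lemma ncsmult_add: "ncsmult k (a + b) = ncsmult k a + ncsmult k b"
  by (rule ext) (simp add: ncsmult_def distrib_left)

lemma ncsmult_diff: "ncsmult k (a - b) = ncsmult k a - ncsmult k b"
  by (rule ext) (simp add: ncsmult_def right_diff_distrib)

lemma ncsmult_ncsmult: "ncsmult k (ncsmult j a) = ncsmult (k * j) a"
  by (rule ext) (simp add: ncsmult_def)

lemma ncsmult_one [simp]: "ncsmult 1 a = a"
  by (rule ext) (simp add: ncsmult_def)

lemma ncsmult_zero_left [simp]: "ncsmult 0 a = 0"
  by (rule ext) (simp add: ncsmult_def)

lemma ncsmult_zero_right [simp]: "ncsmult k 0 = 0"
  by (rule ext) (simp add: ncsmult_def)

lemma ncsmult_sum: "ncsmult k (\<Sum>i\<in>S. f i) = (\<Sum>i\<in>S. ncsmult k (f i))"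
  using sum_comp_morphism[where h="ncsmult k" and g=f and A=S] by (simp add: ncsmult_add comp_def)

lemma ncsmult_add_left: "ncsmult (k + j) a = ncsmult k a + ncsmult j a"
  by (rule ext) (simp add: ncsmult_def distrib_right)

lemma ncsmult_diff_left: "ncsmult (k - j) a = ncsmult k a - ncsmult j a"
  by (rule ext) (simp add: ncsmult_def left_diff_distrib)

lemma ncsmult_minus_left: "ncsmult (- k) a = - ncsmult k a"
  by (rule ext) (simp add: ncsmult_def)

lemma ncword_append: "ncmul (ncword a) (ncword b) = ncword (a @ b)"
proof
  fix u
  have "ncmul (ncword a) (ncword b) u = (\<Sum>xy\<in>splits u. if xy = (a, b) then 1 else 0)"
    unfolding ncmul_splits ncword_def by (rule sum.cong) auto
  also have "\<dots> = ncword (a @ b) u"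
    using finite_splits[of u] by (simp add: ncword_def splits_def)
  finally show "ncmul (ncword a) (ncword b) u = ncword (a @ b) u" .
qed

lemma ncword_Nil: "ncword [] = ncone"
  by (simp add: ncword_def ncone_def)

lemma ncpow_Suc_right: "ncpow x (Suc k) = ncmul (ncpow x k) x"
  by (induction k) (simp_all add: ncmul_assoc[symmetric])

lemma ncpow_ncword: "ncpow (ncword [x]) k = ncword (replicate k x)"
  by (induction k) (simp_all add: ncword_Nil ncword_append)

definition flip_word :: "(bool \<times> nat) list \<Rightarrow> (bool \<times> nat) list" where
  "flip_word u = rev (map (\<lambda>(b, i). (\<not> b, i)) u)"

lemma flip_word_flip_word [simp]: "flip_word (flip_word u) = u"
  by (simp add: flip_word_def rev_map comp_def case_prod_unfold)

lemma flip_word_append: "flip_word (x @ y) = flip_word y @ flip_word x"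
  by (simp add: flip_word_def)

lemma ncstar_apply: "ncstar p u = cnj (p (flip_word u))"
  by (simp add: ncstar_def flip_word_def)

lemma ncstar_ncmul: "ncstar (ncmul p r) = ncmul (ncstar r) (ncstar p)"
proof
  fix u
  have "ncstar (ncmul p r) u = (\<Sum>xy\<in>splits (flip_word u). cnj (p (fst xy)) * cnj (r (snd xy)))"
    by (simp add: ncstar_apply ncmul_splits)
  also have "\<dots> = (\<Sum>xy\<in>splits u. cnj (r (flip_word (fst xy))) * cnj (p (flip_word (snd xy))))"
    by (rule sum.reindex_bij_witness[where i="\<lambda>(a, b). (flip_word b, flip_word a)"
          and j="\<lambda>(x, y). (flip_word y, flip_word x)"])
       (auto simp: splits_def flip_word_append, metis flip_word_append flip_word_flip_word)
  also have "\<dots> = ncmul (ncstar r) (ncstar p) u"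
    by (simp add: ncstar_apply ncmul_splits)
  finally show "ncstar (ncmul p r) u = ncmul (ncstar r) (ncstar p) u" .
qed

lemma ncstar_add: "ncstar (a + b) = ncstar a + ncstar b"
  by (rule ext) (simp add: ncstar_apply)

lemma ncstar_zero [simp]: "ncstar 0 = 0"
  by (rule ext) (simp add: ncstar_apply)

lemma ncstar_ncsmult: "ncstar (ncsmult k a) = ncsmult (cnj k) (ncstar a)"
  by (rule ext) (simp add: ncstar_apply ncsmult_def)

lemma ncstar_sum: "ncstar (\<Sum>i\<in>S. f i) = (\<Sum>i\<in>S. ncstar (f i))"
  using sum_comp_morphism[where h=ncstar and g=f and A=S]
  by (simp add: ncstar_add comp_def)

lemma ncstar_ncone [simp]: "ncstar ncone = ncone"
  by (rule ext) (simp add: ncstar_apply ncone_def flip_word_def)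

lemma ncstar_zg [simp]: "ncstar (zg i) = wg i"
  by (rule ext) (auto simp: ncstar_apply zg_def wg_def ncword_def flip_word_def)

lemma ncstar_wg [simp]: "ncstar (wg i) = zg i"
  by (rule ext) (auto simp: ncstar_apply zg_def wg_def ncword_def flip_word_def)

lemma ncstar_ncpow: "ncstar (ncpow x k) = ncpow (ncstar x) k"
  by (induction k) (simp_all add: ncstar_ncmul flip: ncpow_Suc_right)

lemma ncstar_Qsum: "ncstar (Qsum i) = Qsum i"
  by (simp add: Qsum_def ncstar_sum ncstar_ncmul)

lemma sum_fun_apply: "(\<Sum>i\<in>S. f i) x = (\<Sum>i\<in>S. f i x :: 'b::comm_monoid_add)"
  using sum_comp_morphism[where h="\<lambda>g. g x" and g=f and A=S] by (simp add: comp_def)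

lemma ncpoly_zero [simp]: "ncpoly n 0"
  by (simp add: ncpoly_def)

lemma ncpoly_add [intro]:
  assumes "ncpoly n p" and "ncpoly n r"
  shows "ncpoly n (p + r)"
proof -
  have "{u. (p + r) u \<noteq> 0} \<subseteq> {u. p u \<noteq> 0} \<union> {u. r u \<noteq> 0}"
    by auto
  then show ?thesis
    using assms unfolding ncpoly_def by (auto intro: finite_subset)
qed

lemma ncpoly_ncsmult [intro]:
  assumes "ncpoly n p"
  shows "ncpoly n (ncsmult c p)"
proof -
  have "{u. ncsmult c p u \<noteq> 0} \<subseteq> {u. p u \<noteq> 0}"
    by (auto simp: ncsmult_def)
  then show ?thesis
    using assms unfolding ncpoly_def by (auto intro: finite_subset simp: ncsmult_def)
qed

lemma ncpoly_diff [intro]: "ncpoly n p \<Longrightarrow> ncpoly n r \<Longrightarrow> ncpoly n (p - r)"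
  using ncpoly_add[of n p "- r"] ncpoly_ncsmult[of n r "-1"] by (simp add: ncsmult_minus_left)

lemma ncpoly_sum [intro]: "(\<And>i. i \<in> S \<Longrightarrow> ncpoly n (f i)) \<Longrightarrow> ncpoly n (\<Sum>i\<in>S. f i)"
  by (induction S rule: infinite_finite_induct) auto

lemma ncpoly_ncmul [intro]:
  assumes "ncpoly n p" and "ncpoly n r"
  shows "ncpoly n (ncmul p r)"
proof -
  let ?S = "(\<lambda>(x, y). x @ y) ` ({u. p u \<noteq> 0} \<times> {u. r u \<noteq> 0})"
  have supp: "{u. ncmul p r u \<noteq> 0} \<subseteq> ?S"
  proof
    fix u assume "u \<in> {u. ncmul p r u \<noteq> 0}"
    then have "(\<Sum>k\<le>length u. p (take k u) * r (drop k u)) \<noteq> 0"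
      by (simp add: ncmul_def)
    then obtain k where "p (take k u) * r (drop k u) \<noteq> 0"
      by (meson sum.neutral)
    then show "u \<in> ?S"
      by (intro image_eqI[where x="(take k u, drop k u)"]) auto
  qed
  moreover have "finite ?S"
    using assms by (simp add: ncpoly_def)
  moreover have "\<forall>x\<in>set u. snd x \<in> {1..n}" if "u \<in> ?S" for u
  proof -
    obtain x y where "u = x @ y" "p x \<noteq> 0" "r y \<noteq> 0"
      using \<open>u \<in> ?S\<close> by auto
    then show ?thesis
      using assms unfolding ncpoly_def by auto
  qed
  ultimately show ?thesis
    unfolding ncpoly_def by (blast intro: finite_subset)
qed

lemma ncpoly_ncword [intro]: "\<forall>x\<in>set v. snd x \<in> {1..n} \<Longrightarrow> ncpoly n (ncword v)"
  by (auto simp: ncpoly_def ncword_def)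

lemma ncpoly_ncone [simp]: "ncpoly n ncone"
  by (simp add: ncpoly_def ncone_def)

lemma ncpoly_zg [intro]: "1 \<le> i \<Longrightarrow> i \<le> n \<Longrightarrow> ncpoly n (zg i)"
  by (auto simp: zg_def)

lemma ncpoly_wg [intro]: "1 \<le> i \<Longrightarrow> i \<le> n \<Longrightarrow> ncpoly n (wg i)"
  by (auto simp: wg_def)

lemma ncpoly_ncpow [intro]: "ncpoly n x \<Longrightarrow> ncpoly n (ncpow x k)"
  by (induction k) auto

lemma ncpoly_Qsum [intro]: "i \<le> n \<Longrightarrow> ncpoly n (Qsum i)"
  unfolding Qsum_def by (intro ncpoly_sum ncpoly_ncmul) auto

lemma ncpoly_eq_sum_ncword:
  assumes "ncpoly n p"
  shows "p = (\<Sum>u\<in>{u. p u \<noteq> 0}. ncsmult (p u) (ncword u))"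
proof
  fix v
  have "finite {u. p u \<noteq> 0}"
    using assms by (simp add: ncpoly_def)
  moreover have "(\<Sum>u\<in>{u. p u \<noteq> 0}. ncsmult (p u) (ncword u)) v =
      (\<Sum>u\<in>{u. p u \<noteq> 0}. if u = v then p v else 0)"
    unfolding sum_fun_apply by (rule sum.cong) (auto simp: ncsmult_def ncword_def)
  ultimately show "p v = (\<Sum>u\<in>{u. p u \<noteq> 0}. ncsmult (p u) (ncword u)) v"
    by simp
qed

lemma Zrel_ideal_zero: "0 \<in> Zrel_ideal q n"
  using Zrel_ideal.smult[OF Zrel_ideal.Qn, where c=0] by simp

lemma Zrel_ideal_sum: "(\<And>i. i \<in> S \<Longrightarrow> f i \<in> Zrel_ideal q n) \<Longrightarrow> (\<Sum>i\<in>S. f i) \<in> Zrel_ideal q n"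
  by (induction S rule: infinite_finite_induct) (auto simp: Zrel_ideal_zero intro: Zrel_ideal.add)

lemma Zrel_ideal_uminus: "a \<in> Zrel_ideal q n \<Longrightarrow> - a \<in> Zrel_ideal q n"
  using Zrel_ideal.smult[of a q n "-1"] by (simp add: ncsmult_minus_left)

lemma Zrel_ideal_ncword_left:
  "a \<in> Zrel_ideal q n \<Longrightarrow> \<forall>x\<in>set v. snd x \<in> {1..n} \<Longrightarrow> ncmul (ncword v) a \<in> Zrel_ideal q n"
proof (induction v)
  case Nil
  then show ?case by (simp add: ncword_Nil)
next
  case (Cons x v)
  obtain b i where "x = (b, i)" by (cases x)
  moreover have "ncmul (ncword (x # v)) a = ncmul (ncword [x]) (ncmul (ncword v) a)"
    by (simp add: ncword_append ncmul_assoc[symmetric])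
  ultimately show ?case
    using Cons by (auto intro!: Zrel_ideal.lmul)
qed

lemma Zrel_ideal_ncword_right:
  "a \<in> Zrel_ideal q n \<Longrightarrow> \<forall>x\<in>set v. snd x \<in> {1..n} \<Longrightarrow> ncmul a (ncword v) \<in> Zrel_ideal q n"
proof (induction v rule: rev_induct)
  case Nil
  then show ?case by (simp add: ncword_Nil)
next
  case (snoc x v)
  obtain b i where "x = (b, i)" by (cases x)
  moreover have "ncmul a (ncword (v @ [x])) = ncmul (ncmul a (ncword v)) (ncword [x])"
    by (simp add: ncword_append ncmul_assoc)
  ultimately show ?case
    using snoc by (auto intro!: Zrel_ideal.rmul)
qed

lemma Zrel_ideal_ncmul_left:
  assumes "a \<in> Zrel_ideal q n" and "ncpoly n p"
  shows "ncmul p a \<in> Zrel_ideal q n"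
proof -
  have "ncmul p a = (\<Sum>u\<in>{u. p u \<noteq> 0}. ncsmult (p u) (ncmul (ncword u) a))"
    by (subst ncpoly_eq_sum_ncword[OF assms(2)]) (simp add: ncmul_sum_left ncmul_smult_left)
  also have "\<dots> \<in> Zrel_ideal q n"
    using assms unfolding ncpoly_def
    by (intro Zrel_ideal_sum Zrel_ideal.smult Zrel_ideal_ncword_left) blast+
  finally show ?thesis .
qed

lemma Zrel_ideal_ncmul_right:
  assumes "a \<in> Zrel_ideal q n" and "ncpoly n p"
  shows "ncmul a p \<in> Zrel_ideal q n"
proof -
  have "ncmul a p = (\<Sum>u\<in>{u. p u \<noteq> 0}. ncsmult (p u) (ncmul a (ncword u)))"
    by (subst ncpoly_eq_sum_ncword[OF assms(2)]) (simp add: ncmul_sum_right ncmul_smult_right)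
  also have "\<dots> \<in> Zrel_ideal q n"
    using assms unfolding ncpoly_def
    by (intro Zrel_ideal_sum Zrel_ideal.smult Zrel_ideal_ncword_right) blast+
  finally show ?thesis .
qed

definition ncong :: "real \<Rightarrow> nat \<Rightarrow> ncp \<Rightarrow> ncp \<Rightarrow> bool" where
  "ncong q n a b \<longleftrightarrow> a - b \<in> Zrel_ideal q n"

lemma ncong_refl [simp, intro]: "ncong q n a a"
  by (simp add: ncong_def Zrel_ideal_zero)

lemma ncong_sym: "ncong q n a b \<Longrightarrow> ncong q n b a"
  unfolding ncong_def using Zrel_ideal_uminus by fastforce

lemma ncong_trans [trans]: "ncong q n a b \<Longrightarrow> ncong q n b c \<Longrightarrow> ncong q n a c"
  unfolding ncong_def using Zrel_ideal.add by fastforce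

lemma ncong_eq_trans [trans]: "a = b \<Longrightarrow> ncong q n b c \<Longrightarrow> ncong q n a c"
  by simp

lemma ncong_trans_eq [trans]: "ncong q n a b \<Longrightarrow> b = c \<Longrightarrow> ncong q n a c"
  by simp

lemma ncong_add: "ncong q n a b \<Longrightarrow> ncong q n c d \<Longrightarrow> ncong q n (a + c) (b + d)"
  unfolding ncong_def using Zrel_ideal.add[of "a - b" q n "c - d"] by (simp add: algebra_simps)

lemma ncong_diff: "ncong q n a b \<Longrightarrow> ncong q n c d \<Longrightarrow> ncong q n (a - c) (b - d)"
  unfolding ncong_def using Zrel_ideal.add[of "a - b" q n "- (c - d)"] Zrel_ideal_uminus[of "c - d" q n]
  by (simp add: algebra_simps)

lemma ncong_ncmul_left: "ncong q n a b \<Longrightarrow> ncpoly n p \<Longrightarrow> ncong q n (ncmul p a) (ncmul p b)"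
  unfolding ncong_def using Zrel_ideal_ncmul_left[of "a - b" q n p] by (simp add: ncmul_diff_right)

lemma ncong_ncmul_right: "ncong q n a b \<Longrightarrow> ncpoly n p \<Longrightarrow> ncong q n (ncmul a p) (ncmul b p)"
  unfolding ncong_def using Zrel_ideal_ncmul_right[of "a - b" q n p] by (simp add: ncmul_diff_left)

lemma is_hn_add: "is_hn q n h \<Longrightarrow> ncpoly n p \<Longrightarrow> ncpoly n r \<Longrightarrow> h (p + r) = h p + h r"
  by (simp add: is_hn_def)

lemma is_hn_ncsmult: "is_hn q n h \<Longrightarrow> ncpoly n p \<Longrightarrow> h (ncsmult c p) = c * h p"
  by (simp add: is_hn_def)

lemma is_hn_zero: "is_hn q n h \<Longrightarrow> h 0 = 0"
  using is_hn_ncsmult[of q n h 0 0] by simp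

lemma is_hn_ncong:
  assumes "is_hn q n h" and "ncong q n a b" and "ncpoly n a" and "ncpoly n b"
  shows "h a = h b"
proof -
  have "h a = h (b + (a - b))" by simp
  also have "\<dots> = h b + h (a - b)"
    by (rule is_hn_add[OF assms(1,4) ncpoly_diff[OF assms(3,4)]])
  also have "h (a - b) = 0"
    using assms(1,2) by (simp add: is_hn_def ncong_def)
  finally show ?thesis by simp
qed

section \<open>Real polynomials evaluated in the algebra\<close>

definition nceval :: "real poly \<Rightarrow> ncp \<Rightarrow> ncp" where
  "nceval F X = (\<Sum>i\<le>degree F. ncsmult (of_real (coeff F i)) (ncpow X i))"

lemma nceval_eq_sum_le:
  assumes "degree F \<le> N"
  shows "nceval F X = (\<Sum>i\<le>N. ncsmult (of_real (coeff F i)) (ncpow X i))"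
  unfolding nceval_def using assms
  by (intro sum.mono_neutral_left) (auto simp: coeff_eq_0)

lemma nceval_0 [simp]: "nceval 0 X = 0"
  by (simp add: nceval_def)

lemma nceval_add: "nceval (F + G) X = nceval F X + nceval G X"
proof -
  define N where "N = max (degree F) (degree G)"
  have "degree (F + G) \<le> N"
    unfolding N_def by (rule degree_add_le) auto
  then show ?thesis
    by (simp add: nceval_eq_sum_le[of _ N] N_def ncsmult_add_left sum.distrib)
qed

lemma nceval_smult: "nceval (smult c F) X = ncsmult (of_real c) (nceval F X)"
  by (simp add: nceval_eq_sum_le[of "smult c F" "degree F"] nceval_def ncsmult_sum ncsmult_ncsmult)

lemma nceval_sum: "nceval (\<Sum>i\<in>S. f i) X = (\<Sum>i\<in>S. nceval (f i) X)"
  by (induction S rule: infinite_finite_induct) (simp_all add: nceval_add)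

lemma nceval_pCons: "nceval (pCons a F) X = ncsmult (of_real a) ncone + ncmul X (nceval F X)"
proof -
  have "nceval (pCons a F) X =
      (\<Sum>i\<le>Suc (degree F). ncsmult (of_real (coeff (pCons a F) i)) (ncpow X i))"
    by (rule nceval_eq_sum_le) (simp add: degree_pCons_le)
  also have "\<dots> = ncsmult (of_real a) ncone +
      (\<Sum>i\<le>degree F. ncsmult (of_real (coeff F i)) (ncpow X (Suc i)))"
    by (subst sum.atMost_Suc_shift) simp
  also have "(\<Sum>i\<le>degree F. ncsmult (of_real (coeff F i)) (ncpow X (Suc i))) = ncmul X (nceval F X)"
    by (simp add: nceval_def ncmul_sum_right ncmul_smult_right)
  finally show ?thesis .
qed

lemma nceval_const: "nceval [:c:] X = ncsmult (of_real c) ncone"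
  using nceval_pCons[of c 0 X] by simp

lemma nceval_1 [simp]: "nceval 1 X = ncone"
  using nceval_const[of 1 X] by (simp add: one_pCons)

lemma nceval_linear: "nceval [:a, b:] X = ncsmult (of_real a) ncone + ncsmult (of_real b) X"
  by (simp add: nceval_pCons nceval_const ncmul_smult_right)

lemma nceval_mult: "nceval (F * G) X = ncmul (nceval F X) (nceval G X)"
proof (induction F)
  case 0
  then show ?case by (metis mult_zero_left nceval_0 ncmul_zero_left)
next
  case (pCons a F)
  have "nceval (pCons a F * G) X = nceval (smult a G) X + nceval (pCons 0 (F * G)) X"
    by (simp add: nceval_add)
  also have "\<dots> = ncsmult (of_real a) (nceval G X) + ncmul X (ncmul (nceval F X) (nceval G X))"
    by (simp add: nceval_smult nceval_pCons pCons.IH)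
  also have "\<dots> = ncmul (nceval (pCons a F) X) (nceval G X)"
    by (simp add: nceval_pCons ncmul_add_left ncmul_smult_left ncmul_assoc)
  finally show ?case .
qed

lemma nceval_monom: "nceval (monom c k) X = ncsmult (of_real c) (ncpow X k)"
proof -
  have "nceval (monom c k) X = (\<Sum>i\<le>k. ncsmult (of_real (coeff (monom c k) i)) (ncpow X i))"
    by (rule nceval_eq_sum_le) (simp add: degree_monom_le)
  also have "\<dots> = (\<Sum>i\<le>k. if i = k then ncsmult (of_real c) (ncpow X k) else 0)"
    by (intro sum.cong) (auto simp: coeff_monom)
  finally show ?thesis by simp
qed

lemma nceval_pcompose_scale_pCons:
  "nceval (pcompose (pCons a F) [:0, c:]) X =
     ncsmult (of_real a) ncone + ncsmult (of_real c) (ncmul X (nceval (pcompose F [:0, c:]) X))"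
  by (simp add: pcompose_pCons nceval_pCons nceval_smult ncmul_smult_right)

lemma ncpoly_nceval [intro]: "ncpoly n X \<Longrightarrow> ncpoly n (nceval F X)"
  unfolding nceval_def by (intro ncpoly_sum ncpoly_ncsmult ncpoly_ncpow)

lemma ncpoly_nceval_Qsum [simp]: "i \<le> n \<Longrightarrow> ncpoly n (nceval F (Qsum i))"
  by (intro ncpoly_nceval ncpoly_Qsum)

lemma ncstar_nceval: "ncstar X = X \<Longrightarrow> ncstar (nceval F X) = nceval F X"
  by (simp add: nceval_def ncstar_sum ncstar_ncsmult ncstar_ncpow)

definition lqj_poly :: "nat \<Rightarrow> nat \<Rightarrow> nat \<Rightarrow> real \<Rightarrow> real poly" where
  "lqj_poly al be m p = (\<Sum>k\<le>m. monom (lqj_coeff al be m p k * p ^ k) k)"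

lemma lqJ_eq_nceval: "lqJ al be m p X = nceval (lqj_poly al be m p) X"
  by (simp add: lqJ_def lqj_poly_def nceval_sum nceval_monom)

lemma pcompose_scale_scale: "pcompose (pcompose F [:0, b:]) [:0, c:] = pcompose F [:0, b * c:]"
  by (simp add: pcompose_assoc[symmetric] pcompose_pCons)

definition zw_poly :: "real \<Rightarrow> nat \<Rightarrow> real poly" where
  "zw_poly p j = (\<Prod>i<j. [:1, - ((1 / p) ^ i):])"

definition wz_poly :: "real \<Rightarrow> nat \<Rightarrow> real poly" where
  "wz_poly p d = (\<Prod>i<d. [:1, - (p ^ Suc i):])"

lemma zw_poly_Suc_scale: "pcompose (zw_poly p j) [:0, 1 / p:] * [:1, - 1:] = zw_poly p (Suc j)"
proof (rule poly_eq_poly_eq_iff[THEN iffD1], rule ext)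
  fix x
  have "poly (pcompose (zw_poly p j) [:0, 1 / p:]) x = (\<Prod>i<j. 1 - (1 / p) ^ Suc i * x)"
    by (simp add: zw_poly_def poly_pcompose poly_prod mult_ac)
  moreover have "poly (zw_poly p (Suc j)) x = (1 - x) * (\<Prod>i<j. 1 - (1 / p) ^ Suc i * x)"
    unfolding zw_poly_def prod.lessThan_Suc_shift
    by (simp add: poly_prod algebra_simps del: prod.lessThan_Suc)
  ultimately show "poly (pcompose (zw_poly p j) [:0, 1 / p:] * [:1, - 1:]) x = poly (zw_poly p (Suc j)) x"
    by (simp add: algebra_simps)
qed

section \<open>Commutation relations for \<open>z\<^sub>n\<close>, \<open>w\<^sub>n\<close> and \<open>Q\<^sub>n\<^sub>-\<^sub>1\<close>\<close>

context
  fixes q :: real and n :: nat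
  assumes two_le_n: "2 \<le> n"
begin

lemma ncpoly_zg_n [simp, intro]: "ncpoly n (zg n)"
  and ncpoly_wg_n [simp, intro]: "ncpoly n (wg n)"
  using two_le_n by auto

lemma ncpoly_ncpow_zg_n [simp, intro]: "ncpoly n (ncpow (zg n) d)"
  and ncpoly_ncpow_wg_n [simp, intro]: "ncpoly n (ncpow (wg n) d)"
  by auto

lemma Qsum_eq_Qsum_pred: "Qsum n = Qsum (n - 1) + ncmul (zg n) (wg n)"
proof -
  have "{1..n} = insert n {1..n - 1}"
    using two_le_n by auto
  then have "Qsum n = ncmul (zg n) (wg n) + Qsum (n - 1)"
    unfolding Qsum_def by (simp only:) (subst sum.insert, auto)
  then show ?thesis
    by (simp add: add.commute)
qed

lemma ncong_zw: "ncong q n (ncmul (zg n) (wg n)) (nceval [:1, - 1:] (Qsum (n - 1)))"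
proof -
  have "ncmul (zg n) (wg n) - nceval [:1, - 1:] (Qsum (n - 1)) = Qsum n - ncone"
    by (simp add: Qsum_eq_Qsum_pred nceval_linear ncsmult_minus_left algebra_simps)
  then show ?thesis
    by (simp add: ncong_def Zrel_ideal.Qn)
qed

lemma ncong_wz: "ncong q n (ncmul (wg n) (zg n)) (nceval [:1, - q\<^sup>2:] (Qsum (n - 1)))"
proof -
  let ?Q = "Qsum (n - 1)" and ?z = "zg n" and ?w = "wg n"
  have "ncmul ?w ?z - ncmul ?z ?w - ncsmult (of_real (1 - q\<^sup>2)) (Qsum (n - 1)) \<in> Zrel_ideal q n"
    using Zrel_ideal.wzi[of n n q] two_le_n by simp
  moreover have "ncmul ?z ?w - nceval [:1, - 1:] ?Q \<in> Zrel_ideal q n"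
    using ncong_zw by (simp add: ncong_def)
  ultimately have "(ncmul ?w ?z - ncmul ?z ?w - ncsmult (of_real (1 - q\<^sup>2)) ?Q) +
      (ncmul ?z ?w - nceval [:1, - 1:] ?Q) \<in> Zrel_ideal q n"
    by (rule Zrel_ideal.add)
  moreover have "(ncmul ?w ?z - ncmul ?z ?w - ncsmult (of_real (1 - q\<^sup>2)) ?Q) +
      (ncmul ?z ?w - nceval [:1, - 1:] ?Q) = ncmul ?w ?z - nceval [:1, - q\<^sup>2:] ?Q"
    by (simp add: nceval_linear ncsmult_minus_left ncsmult_diff_left algebra_simps)
  ultimately show ?thesis
    by (simp add: ncong_def)
qed

lemma ncong_Qsum_zg: "ncong q n (ncmul (Qsum (n - 1)) (zg n)) (ncsmult (q\<^sup>2) (ncmul (zg n) (Qsum (n - 1))))"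
proof -
  let ?Q = "Qsum (n - 1)" and ?z = "zg n" and ?w = "wg n"
  have "?Q = ncone - nceval [:1, - 1:] ?Q"
    by (simp add: nceval_linear ncsmult_minus_left)
  also have "ncong q n \<dots> (ncone - ncmul ?z ?w)"
    by (intro ncong_diff ncong_refl ncong_sym[OF ncong_zw])
  finally have "ncong q n (ncmul ?Q ?z) (ncmul (ncone - ncmul ?z ?w) ?z)"
    by (rule ncong_ncmul_right) auto
  also have "ncmul (ncone - ncmul ?z ?w) ?z = ?z - ncmul ?z (ncmul ?w ?z)"
    by (simp add: ncmul_diff_left ncmul_assoc)
  also have "ncong q n \<dots> (?z - ncmul ?z (nceval [:1, - q\<^sup>2:] ?Q))"
    by (intro ncong_diff ncong_refl ncong_ncmul_left ncong_wz) auto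
  also have "?z - ncmul ?z (nceval [:1, - q\<^sup>2:] ?Q) = ncsmult (q\<^sup>2) (ncmul ?z ?Q)"
    by (simp add: nceval_linear ncmul_add_right ncmul_diff_right ncmul_smult_right ncsmult_minus_left)
  finally show ?thesis .
qed

lemma ncong_nceval_zg:
  "ncong q n (ncmul (nceval F (Qsum (n - 1))) (zg n))
     (ncmul (zg n) (nceval (pcompose F [:0, q\<^sup>2:]) (Qsum (n - 1))))"
proof (induction F)
  case 0
  show ?case by (simp only: pcompose_0 nceval_0 ncmul_zero_left ncmul_zero_right ncong_refl)
next
  case (pCons a F)
  let ?Q = "Qsum (n - 1)" and ?z = "zg n"
  let ?G = "nceval (pcompose F [:0, q\<^sup>2:]) ?Q"
  have "ncmul (nceval (pCons a F) ?Q) ?z = ncsmult (of_real a) ?z + ncmul ?Q (ncmul (nceval F ?Q) ?z)"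
    by (simp add: nceval_pCons ncmul_add_left ncmul_smult_left ncmul_assoc)
  also have "ncong q n \<dots> (ncsmult (of_real a) ?z + ncmul (ncmul ?Q ?z) ?G)"
    unfolding ncmul_assoc by (intro ncong_add ncong_refl ncong_ncmul_left pCons.IH) auto
  also have "ncong q n \<dots> (ncsmult (of_real a) ?z + ncmul (ncsmult (q\<^sup>2) (ncmul ?z ?Q)) ?G)"
    by (intro ncong_add ncong_refl ncong_ncmul_right ncong_Qsum_zg) auto
  also have "ncsmult (of_real a) ?z + ncmul (ncsmult (q\<^sup>2) (ncmul ?z ?Q)) ?G =
      ncmul ?z (nceval (pcompose (pCons a F) [:0, q\<^sup>2:]) ?Q)"
    by (simp add: nceval_pcompose_scale_pCons ncmul_add_right ncmul_smult_left ncmul_smult_right ncmul_assoc)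
  finally show ?case .
qed

lemma ncong_nceval_ncpow_zg:
  "ncong q n (ncmul (nceval F (Qsum (n - 1))) (ncpow (zg n) d))
     (ncmul (ncpow (zg n) d) (nceval (pcompose F [:0, (q\<^sup>2) ^ d:]) (Qsum (n - 1))))"
proof (induction d arbitrary: F)
  case 0
  show ?case by simp
next
  case (Suc d)
  let ?Q = "Qsum (n - 1)" and ?z = "zg n"
  have "ncmul (nceval F ?Q) (ncpow ?z (Suc d)) = ncmul (ncmul (nceval F ?Q) ?z) (ncpow ?z d)"
    by (simp add: ncmul_assoc)
  also have "ncong q n \<dots> (ncmul (ncmul ?z (nceval (pcompose F [:0, q\<^sup>2:]) ?Q)) (ncpow ?z d))"
    by (intro ncong_ncmul_right ncong_nceval_zg) auto
  also have "ncong q n \<dots> (ncmul ?z (ncmul (ncpow ?z d)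
      (nceval (pcompose (pcompose F [:0, q\<^sup>2:]) [:0, (q\<^sup>2) ^ d:]) ?Q)))"
    unfolding ncmul_assoc by (intro ncong_ncmul_left Suc.IH) auto
  also have "\<dots> = ncmul (ncpow ?z (Suc d)) (nceval (pcompose F [:0, (q\<^sup>2) ^ Suc d:]) ?Q)"
    by (simp add: pcompose_scale_scale ncmul_assoc)
  finally show ?case .
qed

lemma ncong_ncpow_zg_nceval:
  assumes "q \<noteq> 0"
  shows "ncong q n (ncmul (ncpow (zg n) d) (nceval G (Qsum (n - 1))))
     (ncmul (nceval (pcompose G [:0, (1 / q\<^sup>2) ^ d:]) (Qsum (n - 1))) (ncpow (zg n) d))"
proof -
  have "pcompose (pcompose G [:0, (1 / q\<^sup>2) ^ d:]) [:0, (q\<^sup>2) ^ d:] = G"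
    using assms by (simp add: pcompose_scale_scale power_one_over)
  then show ?thesis
    using ncong_nceval_ncpow_zg[of "pcompose G [:0, (1 / q\<^sup>2) ^ d:]" d] by (metis ncong_sym)
qed

lemma ncong_ncpow_wg_zg:
  "ncong q n (ncmul (ncpow (wg n) d) (ncpow (zg n) d)) (nceval (wz_poly (q\<^sup>2) d) (Qsum (n - 1)))"
proof (induction d)
  case 0
  show ?case by (simp add: wz_poly_def)
next
  case (Suc d)
  let ?Q = "Qsum (n - 1)" and ?z = "zg n" and ?w = "wg n"
  let ?L = "pcompose [:1, - q\<^sup>2:] [:0, (q\<^sup>2) ^ d:]"
  have "ncmul (ncpow ?w (Suc d)) (ncpow ?z (Suc d)) = ncmul (ncpow ?w d) (ncmul (ncmul ?w ?z) (ncpow ?z d))"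
    by (simp only: ncmul_assoc ncpow_Suc_right[of ?w d] ncpow.simps(2)[of ?z d])
  also have "ncong q n \<dots> (ncmul (ncpow ?w d) (ncmul (nceval [:1, - q\<^sup>2:] ?Q) (ncpow ?z d)))"
    by (intro ncong_ncmul_left ncong_ncmul_right ncong_wz) auto
  also have "ncong q n \<dots> (ncmul (ncmul (ncpow ?w d) (ncpow ?z d)) (nceval ?L ?Q))"
    unfolding ncmul_assoc by (intro ncong_ncmul_left ncong_nceval_ncpow_zg) auto
  also have "ncong q n \<dots> (ncmul (nceval (wz_poly (q\<^sup>2) d) ?Q) (nceval ?L ?Q))"
    by (intro ncong_ncmul_right Suc.IH) auto
  also have "\<dots> = nceval (wz_poly (q\<^sup>2) (Suc d)) ?Q"
    by (simp add: nceval_mult[symmetric] wz_poly_def pcompose_pCons)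
  finally show ?case .
qed

lemma ncong_ncpow_zg_wg:
  assumes "q \<noteq> 0"
  shows "ncong q n (ncmul (ncpow (zg n) j) (ncpow (wg n) j)) (nceval (zw_poly (q\<^sup>2) j) (Qsum (n - 1)))"
proof (induction j)
  case 0
  show ?case by (simp add: zw_poly_def)
next
  case (Suc j)
  let ?Q = "Qsum (n - 1)" and ?z = "zg n" and ?w = "wg n"
  let ?G = "pcompose (zw_poly (q\<^sup>2) j) [:0, 1 / q\<^sup>2:]"
  have "ncmul (ncpow ?z (Suc j)) (ncpow ?w (Suc j)) = ncmul ?z (ncmul (ncmul (ncpow ?z j) (ncpow ?w j)) ?w)"
    by (simp only: ncmul_assoc ncpow_Suc_right[of ?w j] ncpow.simps(2)[of ?z j])
  also have "ncong q n \<dots> (ncmul ?z (ncmul (nceval (zw_poly (q\<^sup>2) j) ?Q) ?w))"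
    by (intro ncong_ncmul_left ncong_ncmul_right Suc.IH) auto
  also have "\<dots> = ncmul (ncmul ?z (nceval (zw_poly (q\<^sup>2) j) ?Q)) ?w"
    by (simp add: ncmul_assoc)
  also have "ncong q n \<dots> (ncmul (ncmul (nceval ?G ?Q) ?z) ?w)"
    using ncong_ncpow_zg_nceval[OF assms, of 1 "zw_poly (q\<^sup>2) j"]
    by (intro ncong_ncmul_right) auto
  also have "\<dots> = ncmul (nceval ?G ?Q) (ncmul ?z ?w)"
    by (simp add: ncmul_assoc)
  also have "ncong q n \<dots> (ncmul (nceval ?G ?Q) (nceval [:1, - 1:] ?Q))"
    by (intro ncong_ncmul_left ncong_zw) auto
  also have "\<dots> = nceval (zw_poly (q\<^sup>2) (Suc j)) ?Q"
    by (simp only: nceval_mult[symmetric] zw_poly_Suc_scale)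
  finally show ?case .
qed

end

section \<open>\<open>q\<close>-Pochhammer symbols\<close>

lemma qpoch_0 [simp]: "qpoch a p 0 = 1"
  by (simp add: qpoch_def)

lemma qpoch_Suc: "qpoch a p (Suc k) = qpoch a p k * (1 - a * p ^ k)"
  by (simp add: qpoch_def)

lemma qpoch_Suc_shift: "qpoch a p (Suc k) = (1 - a) * qpoch (a * p) p k"
  unfolding qpoch_def prod.lessThan_Suc_shift by (simp add: mult.assoc)

lemma qpoch_add: "qpoch a p (i + j) = qpoch a p i * qpoch (a * p ^ i) p j"
  by (induction j) (simp_all add: qpoch_Suc power_add mult_ac)

lemma qpoch_pos:
  assumes "0 \<le> a" and "a < 1" and "0 < p" and "p \<le> 1"
  shows "0 < qpoch a p k"
proof -
  have "a * p ^ i < 1" for i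
    using assms mult_left_le[of "p ^ i" a] power_le_one[of p i] by linarith
  then show ?thesis
    unfolding qpoch_def by (intro prod_pos) auto
qed

lemma qpoch_power_pos: "0 < p \<Longrightarrow> p < 1 \<Longrightarrow> 0 < t \<Longrightarrow> 0 < qpoch (p ^ t) p k"
  by (intro qpoch_pos) (auto simp: power_less_one_iff)

lemma qpoch_self_nonzero:
  assumes "1 < r"
  shows "qpoch r r k \<noteq> 0"
proof -
  have "1 - r * r ^ j \<noteq> 0" for j
    using one_less_power[OF assms, of "Suc j"] by simp
  then show ?thesis
    by (simp add: qpoch_def prod_zero_iff)
qed

definition qchu_coeff :: "real \<Rightarrow> nat \<Rightarrow> nat \<Rightarrow> real" where
  "qchu_coeff p k i = qpoch (1 / p ^ k) p i / qpoch p p i"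

lemma qchu_coeff_0 [simp]: "qchu_coeff p k 0 = 1"
  by (simp add: qchu_coeff_def)

lemma qchu_coeff_eq_0: "0 < p \<Longrightarrow> k < i \<Longrightarrow> qchu_coeff p k i = 0"
  unfolding qchu_coeff_def qpoch_def by (auto intro!: prod_zero bexI[where x=k])

lemma qchu_coeff_Suc_Suc:
  assumes "0 < p" and "p < 1"
  shows "qchu_coeff p (Suc k) (Suc j) = qchu_coeff p k (Suc j) - (1 / p) ^ Suc k * qchu_coeff p k j"
proof -
  have lt: "p * p ^ j < 1"
    using assms by (simp flip: power_Suc add: power_less_one_iff)
  have pos: "0 < qpoch p p j"
    using assms by (intro qpoch_pos) auto
  have e1: "qpoch (1 / p ^ Suc k) p (Suc j) = (1 - 1 / p ^ Suc k) * qpoch (1 / p ^ k) p j"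
    using assms by (simp add: qpoch_Suc_shift)
  have e2: "qpoch (1 / p ^ k) p (Suc j) = qpoch (1 / p ^ k) p j * (1 - 1 / p ^ k * p ^ j)"
    by (rule qpoch_Suc)
  have e3: "qpoch p p (Suc j) = qpoch p p j * (1 - p * p ^ j)"
    by (rule qpoch_Suc)
  show ?thesis
    unfolding qchu_coeff_def e1 e2 e3 using assms lt pos by (simp add: field_simps power_Suc)
qed

lemma qchu_vandermonde:
  assumes "0 < p" and "p < 1"
  shows "(\<Sum>i\<le>k. qchu_coeff p k i * p ^ i * qpoch x p i * qpoch (c * p ^ i) p (k - i)) =
    (\<Prod>r<k. x - c * p ^ r)"
  using assms
proof (induction k arbitrary: x c)
  case 0
  then show ?case by simp
next
  case (Suc k)
  define V where "V x c = (\<Sum>i\<le>k. qchu_coeff p k i * p ^ i * qpoch x p i * qpoch (c * p ^ i) p (k - i))"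
    for x c
  define T where "T i = p ^ i * qpoch x p i * qpoch (c * p ^ i) p (Suc k - i)" for i
  have "(\<Sum>i\<le>Suc k. qchu_coeff p (Suc k) i * p ^ i * qpoch x p i * qpoch (c * p ^ i) p (Suc k - i)) =
      qchu_coeff p (Suc k) 0 * T 0 + (\<Sum>j\<le>k. qchu_coeff p (Suc k) (Suc j) * T (Suc j))"
    by (subst sum.atMost_Suc_shift) (simp add: T_def mult.assoc)
  also have "\<dots> = (qchu_coeff p k 0 * T 0 + (\<Sum>j\<le>k. qchu_coeff p k (Suc j) * T (Suc j)))
      - (1 / p) ^ Suc k * (\<Sum>j\<le>k. qchu_coeff p k j * T (Suc j))"
    using assms by (simp add: qchu_coeff_Suc_Suc left_diff_distrib sum_subtractf sum_distrib_left mult.assoc)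
  also have "qchu_coeff p k 0 * T 0 + (\<Sum>j\<le>k. qchu_coeff p k (Suc j) * T (Suc j)) =
      (\<Sum>i\<le>k. qchu_coeff p k i * T i)"
    using assms by (subst sum.atMost_Suc_shift[symmetric]) (simp add: qchu_coeff_eq_0)
  also have "\<dots> = (1 - c * p ^ k) * V x c"
    unfolding V_def sum_distrib_left
  proof (rule sum.cong)
    fix i assume "i \<in> {..k}"
    then have "qpoch (c * p ^ i) p (Suc k - i) = qpoch (c * p ^ i) p (k - i) * (1 - c * p ^ k)"
      by (simp add: Suc_diff_le qpoch_Suc power_add[symmetric] mult.assoc)
    then show "qchu_coeff p k i * T i =
        (1 - c * p ^ k) * (qchu_coeff p k i * p ^ i * qpoch x p i * qpoch (c * p ^ i) p (k - i))"
      by (simp add: T_def mult_ac)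
  qed simp
  also have "(\<Sum>j\<le>k. qchu_coeff p k j * T (Suc j)) = p * (1 - x) * V (x * p) (c * p)"
    unfolding V_def sum_distrib_left
    by (intro sum.cong) (simp_all add: T_def qpoch_Suc_shift mult_ac)
  also have "V (x * p) (c * p) = (\<Prod>r<k. p * (x - c * p ^ r))"
    using Suc.IH[OF assms, of "x * p" "c * p"] by (simp add: V_def algebra_simps)
  also have "\<dots> = p ^ k * (\<Prod>r<k. x - c * p ^ r)"
    by (simp add: prod.distrib)
  also have "V x c = (\<Prod>r<k. x - c * p ^ r)"
    using Suc.IH[OF assms] by (simp add: V_def)
  also have "(1 - c * p ^ k) * (\<Prod>r<k. x - c * p ^ r) -
      (1 / p) ^ Suc k * (p * (1 - x) * (p ^ k * (\<Prod>r<k. x - c * p ^ r))) =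
      (\<Prod>r<Suc k. x - c * p ^ r)"
    using assms by (simp add: field_simps power_Suc)
  finally show ?case .
qed

section \<open>A \<open>q\<close>-integral on real polynomials\<close>

text \<open>\<open>qint p a F\<close> is the Jackson integral \<open>(1 - p\<^sup>a) \<Sum>\<^sub>k p\<^sup>a\<^sup>k F(p\<^sup>k)\<close>, the \<open>q\<close>-analogue
  of \<open>\<integral>\<^sub>0\<^sup>1 F(x) a x\<^sup>a\<^sup>-\<^sup>1 dx\<close>; it is defined through its moments so that no
  convergence argument is needed.\<close>

definition qmoment :: "real \<Rightarrow> nat \<Rightarrow> nat \<Rightarrow> real" where
  "qmoment p a i = (1 - p ^ a) / (1 - p ^ (a + i))"

definition qint :: "real \<Rightarrow> nat \<Rightarrow> real poly \<Rightarrow> real" where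
  "qint p a F = (\<Sum>i\<le>degree F. coeff F i * qmoment p a i)"

lemma qint_eq_sum_le: "degree F \<le> N \<Longrightarrow> qint p a F = (\<Sum>i\<le>N. coeff F i * qmoment p a i)"
  unfolding qint_def by (intro sum.mono_neutral_left) (auto simp: coeff_eq_0)

lemma qint_0 [simp]: "qint p a 0 = 0"
  by (simp add: qint_def)

lemma qint_add: "qint p a (F + G) = qint p a F + qint p a G"
proof -
  define N where "N = max (degree F) (degree G)"
  have "degree (F + G) \<le> N"
    unfolding N_def by (rule degree_add_le) auto
  then show ?thesis
    by (simp add: qint_eq_sum_le[of _ N] N_def distrib_right sum.distrib)
qed

lemma qint_smult: "qint p a (smult c F) = c * qint p a F"
  by (simp add: qint_eq_sum_le[of "smult c F" "degree F"] qint_def sum_distrib_left mult.assoc)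

lemma qint_diff: "qint p a (F - G) = qint p a F - qint p a G"
  using qint_add[of p a F "- G"] qint_smult[of p a "-1" G] by simp

lemma qint_sum: "qint p a (\<Sum>i\<in>A. f i) = (\<Sum>i\<in>A. qint p a (f i))"
  by (induction A rule: infinite_finite_induct) (simp_all add: qint_add)

lemma qint_monom: "qint p a (monom c i) = c * qmoment p a i"
proof -
  have "qint p a (monom c i) = (\<Sum>j\<le>i. coeff (monom c i) j * qmoment p a j)"
    by (rule qint_eq_sum_le) (simp add: degree_monom_le)
  also have "\<dots> = (\<Sum>j\<le>i. if j = i then c * qmoment p a i else 0)"
    by (intro sum.cong) (auto simp: coeff_monom)
  finally show ?thesis by simp
qed

context
  fixes p :: real and a :: nat
  assumes p_pos: "0 < p" and p_less_1: "p < 1" and a_pos: "0 < a"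
begin

lemma power_a_add_less_1: "p ^ (a + i) < 1"
  using p_pos p_less_1 a_pos by (simp add: power_less_one_iff)

lemma qint_1: "qint p a 1 = 1"
  using power_a_add_less_1[of 0] by (simp add: qint_def qmoment_def)

lemma qint_eq_node_1: "qint p a F = (1 - p ^ a) * poly F 1 + p ^ a * qint p a (pcompose F [:0, p:])"
proof -
  define N where "N = degree F"
  have "qint p a (pcompose F [:0, p:]) = (\<Sum>i\<le>N. coeff (pcompose F [:0, p:]) i * qmoment p a i)"
    by (rule qint_eq_sum_le) (simp add: N_def degree_pcompose)
  then have "qint p a F - p ^ a * qint p a (pcompose F [:0, p:]) =
      (\<Sum>i\<le>N. coeff F i * qmoment p a i * (1 - p ^ (a + i)))"
    by (simp add: N_def qint_def coeff_pcompose_linear sum_distrib_left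
        sum_subtractf[symmetric] algebra_simps power_add)
  also have "\<dots> = (\<Sum>i\<le>N. coeff F i * (1 - p ^ a))"
  proof (rule sum.cong)
    fix i
    have "1 - p ^ (a + i) \<noteq> 0"
      using power_a_add_less_1[of i] by simp
    then show "coeff F i * qmoment p a i * (1 - p ^ (a + i)) = coeff F i * (1 - p ^ a)"
      by (simp add: qmoment_def)
  qed simp
  also have "\<dots> = (1 - p ^ a) * poly F 1"
    by (simp add: poly_altdef N_def sum_distrib_left mult.commute)
  finally show ?thesis by simp
qed

lemma qint_eq_scale_if_roots:
  assumes "\<And>r. r < d \<Longrightarrow> poly H (p ^ r) = 0"
  shows "qint p a H = p ^ (a * d) * qint p a (pcompose H [:0, p ^ d:])"
  using assms
proof (induction d arbitrary: H)
  case 0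
  then show ?case by simp
next
  case (Suc d)
  have "qint p a H = p ^ a * qint p a (pcompose H [:0, p:])"
    using qint_eq_node_1[of H] Suc.prems[of 0] by simp
  also have "qint p a (pcompose H [:0, p:]) =
      p ^ (a * d) * qint p a (pcompose (pcompose H [:0, p:]) [:0, p ^ d:])"
    using Suc.prems[of "Suc _"] by (intro Suc.IH) (simp add: poly_pcompose mult.commute)
  finally show ?case
    by (simp add: pcompose_scale_scale power_add power_mult_distrib mult.assoc power_Suc2 power_mult)
qed

lemma qint_monom_mult_wz_poly:
  "qint p a (monom 1 i * wz_poly p g) = (1 - p ^ a) * qpoch p p g / qpoch (p ^ (a + i)) p (Suc g)"
proof (induction g arbitrary: i)
  case 0
  have "1 - p ^ (a + i) \<noteq> 0"
    using power_a_add_less_1[of i] by simp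
  then show ?case by (simp add: wz_poly_def qint_monom qmoment_def qpoch_def)
next
  case (Suc g)
  define D where "D = qpoch (p ^ (a + i)) p (Suc g)"
  define E where "E = qpoch (p ^ (a + Suc i)) p (Suc g)"
  have pos: "0 < D" "0 < E"
    unfolding D_def E_def using a_pos by (intro qpoch_power_pos[OF p_pos p_less_1], simp)+
  have "monom 1 i * wz_poly p (Suc g) = monom 1 i * wz_poly p g - smult (p ^ Suc g) (monom 1 (Suc i) * wz_poly p g)"
    by (intro poly_eq_poly_eq_iff[THEN iffD1] ext) (simp add: wz_poly_def poly_monom algebra_simps)
  then have "qint p a (monom 1 i * wz_poly p (Suc g)) =
      (1 - p ^ a) * qpoch p p g / D - p ^ Suc g * ((1 - p ^ a) * qpoch p p g / E)"
    by (simp only: qint_diff qint_smult Suc.IH D_def E_def)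
  also have "\<dots> = (1 - p ^ a) * qpoch p p g * (1 / D - p ^ Suc g / E)"
    using pos by (simp add: field_simps)
  also have "1 / D - p ^ Suc g / E = (1 - p ^ Suc g) / qpoch (p ^ (a + i)) p (Suc (Suc g))"
  proof -
    have D_Suc: "qpoch (p ^ (a + i)) p (Suc (Suc g)) = D * (1 - p ^ (a + i) * p ^ Suc g)"
      unfolding D_def by (rule qpoch_Suc)
    have E_Suc: "qpoch (p ^ (a + i)) p (Suc (Suc g)) = (1 - p ^ (a + i)) * E"
      unfolding E_def by (subst qpoch_Suc_shift) (simp add: power_Suc2 mult.commute)
    have "1 - p ^ (a + i) * p ^ Suc g \<noteq> 0"
      using power_a_add_less_1[of "i + Suc g"] by (simp add: power_add mult_ac)
    then have "1 / D = (1 - p ^ (a + i) * p ^ Suc g) / qpoch (p ^ (a + i)) p (Suc (Suc g))"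
      using pos by (simp add: D_Suc)
    moreover have "1 - p ^ (a + i) \<noteq> 0"
      using power_a_add_less_1[of i] by simp
    then have "p ^ Suc g / E = p ^ Suc g * (1 - p ^ (a + i)) / qpoch (p ^ (a + i)) p (Suc (Suc g))"
      using pos by (simp add: E_Suc)
    ultimately show ?thesis
      by (simp add: diff_divide_distrib[symmetric] algebra_simps)
  qed
  finally show ?case
    by (simp add: qpoch_Suc[of p p g] power_Suc)
qed

lemma pcompose_zw_poly_Suc_scale: "pcompose (zw_poly p (Suc j)) [:0, p:] = [:1, - p:] * zw_poly p j"
proof (rule poly_eq_poly_eq_iff[THEN iffD1], rule ext)
  fix x
  have "poly (pcompose (zw_poly p (Suc j)) [:0, p:]) x = (1 - p * x) * (\<Prod>i<j. 1 - (1 / p) ^ Suc i * (p * x))"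
    unfolding zw_poly_def prod.lessThan_Suc_shift
    by (simp add: poly_pcompose poly_prod algebra_simps del: prod.lessThan_Suc)
  also have "(\<Prod>i<j. 1 - (1 / p) ^ Suc i * (p * x)) = (\<Prod>i<j. 1 - (1 / p) ^ i * x)"
    using p_pos by (intro prod.cong) (simp_all add: power_Suc)
  finally show "poly (pcompose (zw_poly p (Suc j)) [:0, p:]) x = poly ([:1, - p:] * zw_poly p j) x"
    by (simp add: zw_poly_def poly_prod algebra_simps)
qed

lemma qint_zw_poly_Suc:
  "qint p a (zw_poly p (Suc j)) * (1 - p ^ (a + Suc j)) = p ^ a * (1 - p ^ Suc j) * qint p a (zw_poly p j)"
proof -
  define T where "T = qint p a (zw_poly p j)"
  define T1 where "T1 = qint p a (zw_poly p (Suc j))"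
  define X where "X = qint p a (pCons 0 (zw_poly p j))"
  have "poly (zw_poly p (Suc j)) 1 = 0"
    unfolding zw_poly_def poly_prod by (intro prod_zero bexI[where x=0]) auto
  then have "T1 = p ^ a * qint p a ([:1, - p:] * zw_poly p j)"
    using qint_eq_node_1[of "zw_poly p (Suc j)"] by (simp add: T1_def pcompose_zw_poly_Suc_scale)
  also have "[:1, - p:] * zw_poly p j = zw_poly p j - smult p (pCons 0 (zw_poly p j))"
    by simp
  finally have A: "T1 = p ^ a * (T - p * X)"
    by (simp only: qint_diff qint_smult T_def X_def)
  have "zw_poly p (Suc j) = zw_poly p j - smult ((1 / p) ^ j) (pCons 0 (zw_poly p j))"
    by (simp add: zw_poly_def algebra_simps)
  then have "T1 = T - (1 / p) ^ j * X"
    unfolding T1_def by (simp only: qint_diff qint_smult T_def X_def)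
  then have X_eq: "X = p ^ j * (T - T1)"
    using p_pos by (simp add: field_simps power_one_over)
  have "T1 * (1 - p ^ (a + Suc j)) = p ^ a * (1 - p ^ Suc j) * T"
    using A unfolding X_eq by (simp add: algebra_simps power_add)
  then show ?thesis
    by (simp only: T_def T1_def)
qed

lemma qint_zw_poly:
  "qint p a (zw_poly p j) = qpoch (1 / p) (1 / p) j * qpoch (1 / p) (1 / p) a / qpoch (1 / p) (1 / p) (j + a)"
proof (induction j)
  case 0
  have "qpoch (1 / p) (1 / p) a \<noteq> 0"
    using p_pos p_less_1 by (intro qpoch_self_nonzero) simp
  then show ?case
    using qint_1 by (simp add: zw_poly_def)
next
  case (Suc j)
  define r where "r = 1 / p"
  define V where "V j = qpoch r r j * qpoch r r a / qpoch r r (j + a)" for j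
  have r: "1 < r"
    using p_pos p_less_1 by (simp add: r_def)
  have "1 < r ^ Suc (j + a)"
    using r by (intro one_less_power) auto
  then have V_Suc: "V (Suc j) = V j * ((1 - r * r ^ j) / (1 - r * r ^ (j + a)))"
    using qpoch_self_nonzero[OF r, of "j + a"] by (simp add: V_def qpoch_Suc field_simps)
  have ratio: "(1 - r * r ^ j) / (1 - r * r ^ (j + a)) * (1 - p ^ (a + Suc j)) = p ^ a * (1 - p ^ Suc j)"
  proof -
    define u v where "u = p ^ Suc j" and "v = p ^ a"
    have uv: "r * r ^ j = 1 / u" "r * r ^ (j + a) = 1 / (u * v)" "p ^ (a + Suc j) = u * v"
      by (simp_all add: r_def u_def v_def power_one_over power_add mult.commute)
    have "u * v \<noteq> 1" "0 < u" "0 < v"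
      using power_a_add_less_1[of "Suc j"] p_pos by (simp_all add: u_def v_def power_add mult_ac)
    then show ?thesis
      unfolding uv u_def[symmetric] v_def[symmetric] by (simp add: field_simps)
  qed
  have V_rec: "V (Suc j) * (1 - p ^ (a + Suc j)) = V j * (p ^ a * (1 - p ^ Suc j))"
    unfolding V_Suc mult.assoc ratio ..
  have "qint p a (zw_poly p (Suc j)) * (1 - p ^ (a + Suc j)) = p ^ a * (1 - p ^ Suc j) * V j"
    by (simp only: qint_zw_poly_Suc Suc.IH V_def r_def)
  also have "\<dots> = V (Suc j) * (1 - p ^ (a + Suc j))"
    by (subst V_rec) (rule mult.commute)
  finally have "qint p a (zw_poly p (Suc j)) * (1 - p ^ (a + Suc j)) = V (Suc j) * (1 - p ^ (a + Suc j))" .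
  moreover have "1 - p ^ (a + Suc j) \<noteq> 0"
    using power_a_add_less_1[of "Suc j"] by simp
  ultimately have "qint p a (zw_poly p (Suc j)) = V (Suc j)"
    by simp
  then show ?case
    by (simp only: V_def r_def)
qed

end

section \<open>Orthogonality of little \<open>q\<close>-Jacobi polynomials\<close>

lemma poly_induct_triangular_basis:
  fixes b :: "nat \<Rightarrow> 'a::field poly"
  assumes deg: "\<And>j. degree (b j) = j" and lc: "\<And>j. coeff (b j) j \<noteq> 0"
    and zero: "P 0" and lin: "\<And>F G c. P F \<Longrightarrow> P G \<Longrightarrow> P (F + smult c G)"
    and basis: "\<And>j. j < t \<Longrightarrow> P (b j)"
    and high: "\<And>i. t \<le> i \<Longrightarrow> coeff F i = 0"
  shows "P F"
  using basis high
proof (induction t arbitrary: F)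
  case 0
  then have "F = 0" by (intro poly_eqI) auto
  then show ?case using zero by simp
next
  case (Suc t)
  define c where "c = coeff F t / coeff (b t) t"
  have "coeff (F - smult c (b t)) i = 0" if "t \<le> i" for i
  proof (cases "i = t")
    case True
    then show ?thesis using lc[of t] by (simp add: c_def)
  next
    case False
    then show ?thesis
      using that Suc.prems(2) deg[of t] by (simp add: coeff_eq_0)
  qed
  then have "P (F - smult c (b t))"
    using Suc.prems(1) Suc.IH by simp
  from lin[OF this Suc.prems(1)[of t], of c] show ?case
    by simp
qed

lemma degree_prod_linear:
  fixes f :: "nat \<Rightarrow> 'a::field"
  assumes "\<And>i. f i \<noteq> 0"
  shows "degree (\<Prod>i<j. [:1, f i:]) = j" and "coeff (\<Prod>i<j. [:1, f i:]) j = (\<Prod>i<j. f i)"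
proof -
  have deg1: "degree [:1, f i:] = 1" for i
    using assms[of i] by simp
  show deg: "degree (\<Prod>i<j. [:1, f i:]) = j"
    using degree_prod_eq_sum_degree[of "{..<j}" "\<lambda>i. [:1, f i:]"] deg1 by simp
  show "coeff (\<Prod>i<j. [:1, f i:]) j = (\<Prod>i<j. f i)"
    using lead_coeff_prod[of "\<lambda>i. [:1, f i:]" "{..<j}"] deg deg1 by simp
qed

lemma coeff_lqj_poly_above: "k < i \<Longrightarrow> coeff (lqj_poly al be k p) i = 0"
  by (simp add: lqj_poly_def coeff_sum coeff_monom)

lemma coeff_lqj_poly_top: "coeff (lqj_poly al be k p) k = lqj_coeff al be k p k * p ^ k"
proof -
  have "coeff (lqj_poly al be k p) k = (\<Sum>i\<le>k. if i = k then lqj_coeff al be k p k * p ^ k else 0)"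
    unfolding lqj_poly_def coeff_sum by (intro sum.cong) (auto simp: coeff_monom)
  then show ?thesis by simp
qed

definition wz_poly_tail :: "real \<Rightarrow> nat \<Rightarrow> nat \<Rightarrow> real poly" where
  "wz_poly_tail p be j = (\<Prod>i<j. [:1, - (p ^ (be + 1 + i)):])"

lemma wz_poly_mult_tail: "wz_poly p be * wz_poly_tail p be j = wz_poly p (be + j)"
proof (induction j)
  case 0
  then show ?case by (simp add: wz_poly_tail_def)
next
  case (Suc j)
  have "wz_poly_tail p be (Suc j) = wz_poly_tail p be j * [:1, - (p ^ Suc (be + j)):]"
    by (simp add: wz_poly_tail_def)
  moreover have "wz_poly p (be + Suc j) = wz_poly p (be + j) * [:1, - (p ^ Suc (be + j)):]"
    by (simp add: wz_poly_def)
  ultimately show ?case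
    by (simp only: mult.assoc[symmetric] Suc.IH)
qed

context
  fixes p :: real and al :: nat
  assumes p_pos: "0 < p" and p_less_1: "p < 1"
begin

lemma degree_wz_poly_tail: "degree (wz_poly_tail p be j) = j"
  and coeff_wz_poly_tail: "coeff (wz_poly_tail p be j) j = (\<Prod>i<j. - (p ^ (be + 1 + i)))"
  using degree_prod_linear[of "\<lambda>i. - (p ^ (be + 1 + i))" j] p_pos by (simp_all add: wz_poly_tail_def)

lemma coeff_wz_poly_tail_nonzero: "coeff (wz_poly_tail p be j) j \<noteq> 0"
  unfolding coeff_wz_poly_tail using p_pos by (simp add: prod_zero_iff)

text \<open>By \<open>q\<close>-Chu--Vandermonde. The product vanishes for \<open>be \<le> g < be + k\<close>, which is where
  orthogonality comes from.\<close>

lemma qint_lqj_poly_mult_wz_poly: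
  "qint p (Suc al) (lqj_poly al be k p * wz_poly p g) =
     (1 - p ^ Suc al) * qpoch p p g / (qpoch (p ^ Suc al) p (Suc g) * qpoch (p ^ (Suc al + Suc g)) p k) *
     (\<Prod>r<k. p ^ (Suc al + be + k) - p ^ (Suc al + Suc g) * p ^ r)"
proof -
  define x where "x = p ^ (Suc al + be + k)"
  define c where "c = p ^ (Suc al + Suc g)"
  define K where "K = (1 - p ^ Suc al) * qpoch p p g / (qpoch (p ^ Suc al) p (Suc g) * qpoch c p k)"
  have pos: "0 < qpoch (p ^ Suc t) p m" for t m
    using p_pos p_less_1 by (intro qpoch_power_pos) auto
  have "lqj_poly al be k p * wz_poly p g =
      (\<Sum>i\<le>k. smult (lqj_coeff al be k p i * p ^ i) (monom 1 i * wz_poly p g))"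
    unfolding lqj_poly_def sum_distrib_right
    by (intro sum.cong) (simp_all only: mult_smult_left[symmetric] smult_monom mult.right_neutral)
  then have "qint p (Suc al) (lqj_poly al be k p * wz_poly p g) =
      (\<Sum>i\<le>k. lqj_coeff al be k p i * p ^ i *
         ((1 - p ^ Suc al) * qpoch p p g / qpoch (p ^ (Suc al + i)) p (Suc g)))"
    using p_pos p_less_1 by (simp add: qint_sum qint_smult qint_monom_mult_wz_poly)
  also have "\<dots> = (\<Sum>i\<le>k. K * (qchu_coeff p k i * p ^ i * qpoch x p i * qpoch (c * p ^ i) p (k - i)))"
  proof (rule sum.cong)
    fix i assume "i \<in> {..k}"
    then have split_k: "qpoch c p k = qpoch c p i * qpoch (c * p ^ i) p (k - i)"
      using qpoch_add[of c p i "k - i"] by simp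
    have swap: "qpoch (p ^ Suc al) p i * qpoch (p ^ (Suc al + i)) p (Suc g) =
        qpoch (p ^ Suc al) p (Suc g) * qpoch c p i"
      using qpoch_add[of "p ^ Suc al" p i "Suc g"] qpoch_add[of "p ^ Suc al" p "Suc g" i]
      by (simp add: c_def power_add add.commute mult_ac)
    have coeff: "lqj_coeff al be k p i = qchu_coeff p k i * qpoch x p i / qpoch (p ^ Suc al) p i"
      by (simp add: lqj_coeff_def qchu_coeff_def x_def add_ac)
    have pos_i: "0 < qpoch (p ^ Suc al) p i" "0 < qpoch (p ^ (Suc al + i)) p (Suc g)"
      "0 < qpoch (p ^ Suc al) p (Suc g)" "0 < qpoch c p i" "0 < qpoch c p k"
      using pos[of al i] pos[of "al + i" "Suc g"] pos[of al "Suc g"] pos[of "Suc (al + g)" i]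
        pos[of "Suc (al + g)" k]
      by (simp_all add: c_def)
    then have "qpoch (c * p ^ i) p (k - i) \<noteq> 0"
      using split_k by auto
    have "lqj_coeff al be k p i * p ^ i *
        ((1 - p ^ Suc al) * qpoch p p g / qpoch (p ^ (Suc al + i)) p (Suc g)) =
        qchu_coeff p k i * p ^ i * qpoch x p i * ((1 - p ^ Suc al) * qpoch p p g) /
        (qpoch (p ^ Suc al) p i * qpoch (p ^ (Suc al + i)) p (Suc g))"
      by (simp add: coeff)
    also have "\<dots> = qchu_coeff p k i * p ^ i * qpoch x p i * ((1 - p ^ Suc al) * qpoch p p g) /
        (qpoch (p ^ Suc al) p (Suc g) * qpoch c p i)"
      unfolding swap ..
    also have "\<dots> = K * (qchu_coeff p k i * p ^ i * qpoch x p i * qpoch (c * p ^ i) p (k - i))"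
      unfolding K_def split_k using pos_i \<open>qpoch (c * p ^ i) p (k - i) \<noteq> 0\<close>
      by (simp add: field_simps)
    finally show "lqj_coeff al be k p i * p ^ i *
        ((1 - p ^ Suc al) * qpoch p p g / qpoch (p ^ (Suc al + i)) p (Suc g)) =
        K * (qchu_coeff p k i * p ^ i * qpoch x p i * qpoch (c * p ^ i) p (k - i))" .
  qed simp
  also have "\<dots> = K * (\<Prod>r<k. x - c * p ^ r)"
    using p_pos p_less_1 by (simp add: qchu_vandermonde flip: sum_distrib_left)
  finally show ?thesis
    by (simp add: K_def x_def c_def)
qed

lemma qint_lqj_poly_mult_wz_poly_eq_0:
  assumes "j < k"
  shows "qint p (Suc al) (lqj_poly al be k p * wz_poly p (be + j)) = 0"
proof -
  have "Suc al + Suc (be + j) + (k - j - 1) = Suc al + be + k"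
    using assms by simp
  then have "p ^ (Suc al + Suc (be + j)) * p ^ (k - j - 1) = p ^ (Suc al + be + k)"
    by (simp only: power_add[symmetric])
  then have "(\<Prod>r<k. p ^ (Suc al + be + k) - p ^ (Suc al + Suc (be + j)) * p ^ r) = 0"
    using assms by (intro prod_zero bexI[where x="k - j - 1"]) auto
  then show ?thesis
    by (simp add: qint_lqj_poly_mult_wz_poly)
qed

lemma qint_lqj_poly_orthogonal:
  assumes "\<And>i. k \<le> i \<Longrightarrow> coeff F i = 0"
  shows "qint p (Suc al) (lqj_poly al be k p * (F * wz_poly p be)) = 0"
proof (rule poly_induct_triangular_basis[where b="wz_poly_tail p be" and t=k
    and P="\<lambda>F. qint p (Suc al) (lqj_poly al be k p * (F * wz_poly p be)) = 0"])
  fix F G :: "real poly" and c :: real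
  assume "qint p (Suc al) (lqj_poly al be k p * (F * wz_poly p be)) = 0"
    and "qint p (Suc al) (lqj_poly al be k p * (G * wz_poly p be)) = 0"
  then show "qint p (Suc al) (lqj_poly al be k p * ((F + smult c G) * wz_poly p be)) = 0"
    by (simp add: algebra_simps qint_add qint_smult)
next
  fix j assume "j < k"
  then show "qint p (Suc al) (lqj_poly al be k p * (wz_poly_tail p be j * wz_poly p be)) = 0"
    using qint_lqj_poly_mult_wz_poly_eq_0 by (simp add: mult.commute[of "wz_poly_tail p be j"] wz_poly_mult_tail)
qed (use assms degree_wz_poly_tail coeff_wz_poly_tail_nonzero in auto)

lemma lqj_poly_lead_coeff_ratio:
  "coeff (lqj_poly al be k p) k / coeff (wz_poly_tail p be k) k =
     qpoch (p ^ (Suc al + be + k)) p k * p ^ (k * Suc al) /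
     (qpoch (p ^ Suc al) p k * p ^ ((Suc al + be + k) * k))"
proof -
  define s where "s = Suc al + be + k"
  define Pn where "Pn = (\<Prod>i<k. - (p ^ (be + 1 + i)))"
  have reversal: "qpoch (1 / p ^ k) p k * p ^ k * p ^ (s * k) = p ^ (k * Suc al) * qpoch p p k * Pn"
  proof -
    have "qpoch (1 / p ^ k) p k * p ^ k * p ^ (s * k) = (\<Prod>i<k. (1 - 1 / p ^ k * p ^ i) * p * p ^ s)"
      by (simp only: qpoch_def prod.distrib prod_constant card_lessThan power_mult)
    also have "\<dots> = (\<Prod>i<k. p ^ Suc al * (1 - p ^ (k - i)) * (- (p ^ (be + 1 + i))))"
    proof (rule prod.cong)
      fix i assume "i \<in> {..<k}"
      then obtain t where "k = i + t" "0 < t"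
        by (metis add_diff_inverse_nat lessThan_iff less_imp_le not_less zero_less_diff)
      then show "(1 - 1 / p ^ k * p ^ i) * p * p ^ s = p ^ Suc al * (1 - p ^ (k - i)) * (- (p ^ (be + 1 + i)))"
        using p_pos by (simp add: s_def power_add field_simps)
    qed simp
    also have "\<dots> = (p ^ Suc al) ^ k * (\<Prod>i<k. 1 - p ^ (k - i)) * Pn"
      by (simp only: Pn_def prod.distrib prod_constant card_lessThan)
    also have "(\<Prod>i<k. 1 - p ^ (k - i)) = qpoch p p k"
      unfolding qpoch_def
      by (subst prod.nat_diff_reindex[symmetric]) (intro prod.cong, simp_all add: Suc_diff_Suc flip: power_Suc)
    also have "(p ^ Suc al) ^ k = p ^ (k * Suc al)"
      by (metis power_mult mult.commute)
    finally show ?thesis .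
  qed
  have "Pn \<noteq> 0" "0 < qpoch (p ^ Suc al) p k" "0 < qpoch p p k"
    using p_pos p_less_1 qpoch_power_pos[OF p_pos p_less_1, of "Suc al" k]
    by (auto simp: Pn_def prod_zero_iff intro: qpoch_pos)
  then show ?thesis
    using reversal p_pos unfolding coeff_lqj_poly_top coeff_wz_poly_tail Pn_def[symmetric] s_def[symmetric]
    by (simp add: lqj_coeff_def s_def add_ac field_simps)
qed

lemma qint_lqj_poly_norm:
  "qint p (Suc al) (lqj_poly al be k p * (lqj_poly al be k p * wz_poly p be)) =
     (1 - p ^ Suc al) * p ^ (k * Suc al) / (1 - p ^ (Suc al + be + 2 * k)) *
     (qpoch p p (be + k) * qpoch p p k / (qpoch (p ^ Suc al) p (be + k) * qpoch (p ^ Suc al) p k))"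
proof -
  define P where "P = lqj_poly al be k p"
  define s where "s = Suc al + be + k"
  define c where "c = coeff P k / coeff (wz_poly_tail p be k) k"
  have "coeff (P - smult c (wz_poly_tail p be k)) i = 0" if "k \<le> i" for i
  proof (cases "i = k")
    case True
    then show ?thesis
      using coeff_wz_poly_tail_nonzero[of be k] by (simp add: c_def)
  next
    case False
    then show ?thesis
      using that degree_wz_poly_tail[of be k] by (simp add: P_def coeff_lqj_poly_above coeff_eq_0)
  qed
  then have "qint p (Suc al) (P * ((P - smult c (wz_poly_tail p be k)) * wz_poly p be)) = 0"
    unfolding P_def by (rule qint_lqj_poly_orthogonal)
  moreover have "P * (P * wz_poly p be) =
      P * ((P - smult c (wz_poly_tail p be k)) * wz_poly p be) + smult c (P * wz_poly p (be + k))"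
    by (simp add: wz_poly_mult_tail[symmetric] algebra_simps)
  ultimately have orth: "qint p (Suc al) (P * (P * wz_poly p be)) = c * qint p (Suc al) (P * wz_poly p (be + k))"
    by (simp add: qint_add qint_smult)
  have c_eq: "c = qpoch (p ^ s) p k * p ^ (k * Suc al) / (qpoch (p ^ Suc al) p k * p ^ (s * k))"
    unfolding c_def P_def s_def by (rule lqj_poly_lead_coeff_ratio)
  have top: "qint p (Suc al) (P * wz_poly p (be + k)) =
      (1 - p ^ Suc al) * qpoch p p (be + k) /
      (qpoch (p ^ Suc al) p (be + k) * (1 - p ^ s) * qpoch (p ^ Suc s) p k) * (p ^ (s * k) * qpoch p p k)"
  proof -
    have "(\<Prod>r<k. p ^ (Suc al + be + k) - p ^ (Suc al + Suc (be + k)) * p ^ r) =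
        (\<Prod>r<k. p ^ s * (1 - p * p ^ r))"
      by (intro prod.cong) (simp_all add: s_def algebra_simps)
    also have "\<dots> = p ^ (s * k) * qpoch p p k"
      by (simp add: prod.distrib qpoch_def power_mult)
    finally have prod_eq: "(\<Prod>r<k. p ^ (Suc al + be + k) - p ^ (Suc al + Suc (be + k)) * p ^ r) =
        p ^ (s * k) * qpoch p p k" .
    have "p ^ Suc al * p ^ (be + k) = p ^ s"
      unfolding s_def power_add[symmetric] by (simp only: add.assoc)
    then have qpoch_eq: "qpoch (p ^ Suc al) p (Suc (be + k)) = qpoch (p ^ Suc al) p (be + k) * (1 - p ^ s)"
      by (simp only: qpoch_Suc)
    have power_eq: "p ^ (Suc al + Suc (be + k)) = p ^ Suc s"
      by (simp add: s_def add.assoc)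
    show ?thesis
      unfolding P_def qint_lqj_poly_mult_wz_poly prod_eq unfolding qpoch_eq power_eq by (simp add: mult_ac)
  qed
  have shift: "qpoch (p ^ Suc s) p k = qpoch (p ^ s) p k * (1 - p ^ (s + k)) / (1 - p ^ s)"
  proof -
    have "p ^ s < 1"
      unfolding s_def add_Suc by (rule power_Suc_less_one[OF p_pos p_less_1])
    then have "1 - p ^ s \<noteq> 0"
      by simp
    then show ?thesis
      using qpoch_Suc[of "p ^ s" p k] qpoch_Suc_shift[of "p ^ s" p k]
      by (simp add: power_add field_simps)
  qed
  have "Suc al + be + 2 * k = s + k"
    by (simp add: s_def)
  then have exp_eq: "p ^ (Suc al + be + 2 * k) = p ^ (s + k)"
    by (rule arg_cong)
  have "p ^ s < 1" "p ^ (s + k) < 1"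
    unfolding s_def add_Suc by (intro power_Suc_less_one p_pos p_less_1)+
  moreover define A B where "A = 1 - p ^ s" and "B = 1 - p ^ (s + k)"
  ultimately have "A \<noteq> 0" "B \<noteq> 0"
    by simp_all
  moreover have "0 < qpoch (p ^ s) p k" "0 < qpoch (p ^ Suc al) p k"
    "0 < qpoch (p ^ Suc al) p (be + k)" "0 < qpoch p p k"
    using p_pos p_less_1 by (auto simp: s_def intro!: qpoch_power_pos qpoch_pos simp del: power_Suc)
  ultimately show ?thesis
    unfolding P_def[symmetric] orth c_eq top shift exp_eq A_def[symmetric] B_def[symmetric]
    using p_pos by (simp add: field_simps)
qed

end

lemma cval_eq_qint_norm:
  "cval al q (be + k) k =
     (1 - (q\<^sup>2) ^ Suc al) * (q\<^sup>2) ^ (k * Suc al) / (1 - (q\<^sup>2) ^ (Suc al + be + 2 * k)) *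
     (qpoch (q\<^sup>2) (q\<^sup>2) (be + k) * qpoch (q\<^sup>2) (q\<^sup>2) k /
      (qpoch ((q\<^sup>2) ^ Suc al) (q\<^sup>2) (be + k) * qpoch ((q\<^sup>2) ^ Suc al) (q\<^sup>2) k))"
proof -
  have "al + (be + k) + k + 1 = Suc al + be + 2 * k"
    by simp
  then have "q ^ (2 * (al + (be + k) + k + 1)) = (q\<^sup>2) ^ (Suc al + be + 2 * k)"
    by (simp only: power_mult)
  moreover have "q ^ (2 * (al + 1)) = (q\<^sup>2) ^ Suc al" "q ^ (2 * k * (al + 1)) = (q\<^sup>2) ^ (k * Suc al)"
    by (simp_all only: power_mult mult.assoc Suc_eq_plus1)
  ultimately show ?thesis
    unfolding cval_def by (simp only: ac_simps)
qed

lemma cval_shift: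
  "cval al q l (l + d) = (q\<^sup>2) ^ (Suc al * d) * cval al q (l + d) l"
proof -
  have "q ^ (2 * (l + d) * (al + 1)) = (q\<^sup>2) ^ (Suc al * d) * q ^ (2 * l * (al + 1))"
    by (simp add: power_mult[symmetric] power_add[symmetric] algebra_simps)
  then show ?thesis
    by (simp add: cval_def ac_simps)
qed

section \<open>The functional \<open>h\<^sub>n\<close> on polynomials in \<open>Q\<^sub>n\<^sub>-\<^sub>1\<close>\<close>

lemma zw_word_single:
  assumes "1 \<le> n"
  shows "zw_word n (\<lambda>i. if i = n then j else 0) (\<lambda>i. if i = n then j else 0) =
    replicate j (False, n) @ replicate j (True, n)"
proof -
  have up: "[1..<n + 1] = [1..<n] @ [n]"
    using assms by simp
  have nil: "concat (map (\<lambda>i. replicate (if i = n then j else 0) (b, i)) [1..<n]) = []"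
    "concat (map (\<lambda>i. replicate (if i = n then j else 0) (b, i)) (rev [1..<n])) = []" for b
    by (auto simp: concat_eq_Nil_conv)
  show ?thesis
    unfolding zw_word_def up
    by (simp only: map_append concat_append rev_append nil list.map concat.simps rev.simps
        append_Nil append_Nil2) simp
qed

lemma hval_single:
  assumes "1 \<le> n"
  shows "hval q n (\<lambda>i. if i = n then j else 0) =
    qpoch (1 / q\<^sup>2) (1 / q\<^sup>2) j * qpoch (1 / q\<^sup>2) (1 / q\<^sup>2) (n - 1) /
    qpoch (1 / q\<^sup>2) (1 / q\<^sup>2) (j + (n - 1))"
proof -
  have weight: "(\<Sum>i\<in>{1..n - 1}. (n - i) * (if i = n then j else 0)) = 0"
    by simp
  have prod: "(\<Prod>i\<in>{1..n}. qpoch (1 / q\<^sup>2) (1 / q\<^sup>2) (if i = n then j else 0)) =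
      qpoch (1 / q\<^sup>2) (1 / q\<^sup>2) j"
  proof -
    have "(\<Prod>i\<in>{1..n}. qpoch (1 / q\<^sup>2) (1 / q\<^sup>2) (if i = n then j else 0)) =
        (\<Prod>i\<in>{1..n}. if i = n then qpoch (1 / q\<^sup>2) (1 / q\<^sup>2) j else 1)"
      by (intro prod.cong) auto
    then show ?thesis
      using assms by (simp add: prod.delta)
  qed
  have total: "(\<Sum>i\<in>{1..n}. if i = n then j else 0) + n - 1 = j + (n - 1)"
    using assms by simp
  show ?thesis
    unfolding hval_def weight prod total by simp
qed

lemma degree_zw_poly: "0 < p \<Longrightarrow> degree (zw_poly p j) = j"
  and coeff_zw_poly_nonzero: "0 < p \<Longrightarrow> coeff (zw_poly p j) j \<noteq> 0"
  using degree_prod_linear[of "\<lambda>i. - ((1 / p) ^ i)" j] by (simp_all add: zw_poly_def prod_zero_iff)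

lemma poly_zw_poly_power: "0 < p \<Longrightarrow> r < d \<Longrightarrow> poly (zw_poly p d) (p ^ r) = 0"
  unfolding zw_poly_def poly_prod by (intro prod_zero bexI[where x=r]) (auto simp: power_one_over)

lemma pcompose_zw_poly_power:
  assumes "0 < p"
  shows "pcompose (zw_poly p d) [:0, p ^ d:] = wz_poly p d"
proof (rule poly_eq_poly_eq_iff[THEN iffD1], rule ext)
  fix x
  have "poly (pcompose (zw_poly p d) [:0, p ^ d:]) x = (\<Prod>i<d. 1 - (1 / p) ^ i * (p ^ d * x))"
    by (simp add: zw_poly_def poly_pcompose poly_prod mult_ac)
  also have "\<dots> = (\<Prod>i<d. 1 - (1 / p) ^ (d - Suc i) * (p ^ d * x))"
    by (rule prod.nat_diff_reindex[symmetric])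
  also have "\<dots> = (\<Prod>i<d. 1 - p ^ Suc i * x)"
  proof (rule prod.cong)
    fix i assume "i \<in> {..<d}"
    then have "d = (d - Suc i) + Suc i"
      by simp
    then have "p ^ d = p ^ (d - Suc i) * p ^ Suc i"
      by (metis power_add)
    then show "1 - (1 / p) ^ (d - Suc i) * (p ^ d * x) = 1 - p ^ Suc i * x"
      using assms by (simp add: power_one_over field_simps)
  qed simp
  finally show "poly (pcompose (zw_poly p d) [:0, p ^ d:]) x = poly (wz_poly p d) x"
    by (simp add: wz_poly_def poly_prod mult_ac)
qed

context
  fixes q :: real and n :: nat and h :: "ncp \<Rightarrow> complex"
  assumes q_pos: "0 < q" and q_less_1: "q < 1" and two_le_n: "2 \<le> n" and h: "is_hn q n h"
begin

lemma is_hn_nceval_zw_poly: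
  "h (nceval (zw_poly (q\<^sup>2) j) (Qsum (n - 1))) = of_real (qint (q\<^sup>2) (n - 1) (zw_poly (q\<^sup>2) j))"
proof -
  have "h (nceval (zw_poly (q\<^sup>2) j) (Qsum (n - 1))) = h (ncmul (ncpow (zg n) j) (ncpow (wg n) j))"
    using is_hn_ncong[OF h ncong_sym[OF ncong_ncpow_zg_wg]] two_le_n q_pos by auto
  also have "ncmul (ncpow (zg n) j) (ncpow (wg n) j) =
      ncword (zw_word n (\<lambda>i. if i = n then j else 0) (\<lambda>i. if i = n then j else 0))"
    using two_le_n by (simp add: zw_word_single zg_def wg_def ncpow_ncword ncword_append)
  also have "h \<dots> = of_real (hval q n (\<lambda>i. if i = n then j else 0))"
    using h by (simp add: is_hn_def)
  also have "hval q n (\<lambda>i. if i = n then j else 0) = qint (q\<^sup>2) (n - 1) (zw_poly (q\<^sup>2) j)"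
    using two_le_n q_pos q_less_1 by (simp add: hval_single qint_zw_poly power_less_one_iff)
  finally show ?thesis .
qed

text \<open>The \<open>zw_poly (q\<^sup>2) j\<close> form a triangular basis, and on them \<open>h\<^sub>n\<close> is given by its
  values on the words \<open>z\<^sub>n\<^sup>j w\<^sub>n\<^sup>j\<close>.\<close>

lemma is_hn_nceval_Qsum: "h (nceval F (Qsum (n - 1))) = of_real (qint (q\<^sup>2) (n - 1) F)"
proof (rule poly_induct_triangular_basis[where b="zw_poly (q\<^sup>2)" and t="Suc (degree F)"
    and P="\<lambda>F. h (nceval F (Qsum (n - 1))) = of_real (qint (q\<^sup>2) (n - 1) F)"])
  fix F G c
  assume "h (nceval F (Qsum (n - 1))) = of_real (qint (q\<^sup>2) (n - 1) F)"
    and "h (nceval G (Qsum (n - 1))) = of_real (qint (q\<^sup>2) (n - 1) G)"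
  then show "h (nceval (F + smult c G) (Qsum (n - 1))) = of_real (qint (q\<^sup>2) (n - 1) (F + smult c G))"
    using two_le_n
    by (simp add: nceval_add nceval_smult qint_add qint_smult is_hn_add[OF h] is_hn_ncsmult[OF h]
        ncpoly_ncsmult)
qed (use q_pos is_hn_zero[OF h] is_hn_nceval_zw_poly degree_zw_poly coeff_zw_poly_nonzero
       in \<open>auto simp: coeff_eq_0\<close>)

lemma is_hn_qdisk_norm_le:
  assumes "m \<le> l"
  shows "h (ncmul (ncstar (qdisk n q l m)) (qdisk n q l m)) = of_real (cval (n - 2) q l m)"
proof -
  define d P Q where "d = l - m" and "P = lqj_poly (n - 2) d m (q\<^sup>2)" and "Q = Qsum (n - 1)"
  have n: "n - 1 = Suc (n - 2)"
    using two_le_n by simp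
  have R: "qdisk n q l m = ncmul (ncpow (zg n) d) (nceval P Q)"
    using assms by (simp add: qdisk_def d_def P_def Q_def lqJ_eq_nceval)
  then have R_star: "ncstar (qdisk n q l m) = ncmul (nceval P Q) (ncpow (wg n) d)"
    by (simp add: Q_def ncstar_ncmul ncstar_ncpow ncstar_nceval ncstar_Qsum)
  have "ncmul (ncstar (qdisk n q l m)) (qdisk n q l m) =
      ncmul (nceval P Q) (ncmul (ncmul (ncpow (wg n) d) (ncpow (zg n) d)) (nceval P Q))"
    unfolding R_star unfolding R by (simp add: ncmul_assoc)
  also have "ncong q n \<dots> (ncmul (nceval P Q) (ncmul (nceval (wz_poly (q\<^sup>2) d) Q) (nceval P Q)))"
    unfolding Q_def using two_le_n
    by (intro ncong_ncmul_left ncong_ncmul_right ncong_ncpow_wg_zg) auto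
  also have "\<dots> = nceval (P * (wz_poly (q\<^sup>2) d * P)) Q"
    by (simp add: nceval_mult)
  finally have "h (ncmul (ncstar (qdisk n q l m)) (qdisk n q l m)) = h (nceval (P * (wz_poly (q\<^sup>2) d * P)) Q)"
    unfolding R_star unfolding R Q_def using two_le_n by (intro is_hn_ncong[OF h] ncpoly_ncmul) auto
  also have "\<dots> = of_real (qint (q\<^sup>2) (Suc (n - 2)) (P * (P * wz_poly (q\<^sup>2) d)))"
    unfolding Q_def is_hn_nceval_Qsum unfolding n by (simp add: mult_ac)
  also have "qint (q\<^sup>2) (Suc (n - 2)) (P * (P * wz_poly (q\<^sup>2) d)) = cval (n - 2) q (d + m) m"
    unfolding P_def cval_eq_qint_norm using q_pos q_less_1
    by (intro qint_lqj_poly_norm) (auto simp: power_less_one_iff)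
  finally show ?thesis
    using assms by (simp add: d_def)
qed

text \<open>Here \<open>R\<^sup>*R\<close> reduces to \<open>G(Q) \<cdot> zw_poly p d (Q)\<close>; as \<open>zw_poly p d\<close> vanishes at
  \<open>1, p, \<dots>, p\<^sup>d\<^sup>-\<^sup>1\<close>, rescaling the \<open>q\<close>-integral by \<open>p\<^sup>d\<close> leads back to the norm of the first case.\<close>

lemma is_hn_qdisk_norm_less:
  assumes "l < m"
  shows "h (ncmul (ncstar (qdisk n q l m)) (qdisk n q l m)) = of_real (cval (n - 2) q l m)"
proof -
  define p d P Q where "p = q\<^sup>2" and "d = m - l" and "P = lqj_poly (n - 2) d l (q\<^sup>2)"
    and "Q = Qsum (n - 1)"
  define G where "G = pcompose (P * P) [:0, (1 / p) ^ d:]"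
  have n: "n - 1 = Suc (n - 2)"
    using two_le_n by simp
  have p: "0 < p" "p < 1"
    using q_pos q_less_1 by (simp_all add: p_def power_less_one_iff)
  have R: "qdisk n q l m = ncmul (nceval P Q) (ncpow (wg n) d)"
    using assms by (simp add: qdisk_def d_def P_def Q_def lqJ_eq_nceval)
  then have R_star: "ncstar (qdisk n q l m) = ncmul (ncpow (zg n) d) (nceval P Q)"
    by (simp add: Q_def ncstar_ncmul ncstar_ncpow ncstar_nceval ncstar_Qsum)
  have "ncmul (ncstar (qdisk n q l m)) (qdisk n q l m) =
      ncmul (ncmul (ncpow (zg n) d) (nceval (P * P) Q)) (ncpow (wg n) d)"
    unfolding R_star unfolding R by (simp add: ncmul_assoc nceval_mult)
  also have "ncong q n \<dots> (ncmul (ncmul (nceval G Q) (ncpow (zg n) d)) (ncpow (wg n) d))"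
    unfolding Q_def G_def p_def using q_pos two_le_n
    by (intro ncong_ncmul_right ncong_ncpow_zg_nceval) auto
  also have "\<dots> = ncmul (nceval G Q) (ncmul (ncpow (zg n) d) (ncpow (wg n) d))"
    by (simp add: ncmul_assoc)
  also have "ncong q n \<dots> (ncmul (nceval G Q) (nceval (zw_poly p d) Q))"
    unfolding Q_def p_def using q_pos two_le_n
    by (intro ncong_ncmul_left ncong_ncpow_zg_wg) auto
  also have "\<dots> = nceval (G * zw_poly p d) Q"
    by (simp add: nceval_mult)
  finally have "h (ncmul (ncstar (qdisk n q l m)) (qdisk n q l m)) = h (nceval (G * zw_poly p d) Q)"
    unfolding R_star unfolding R Q_def using two_le_n by (intro is_hn_ncong[OF h] ncpoly_ncmul) auto
  also have "\<dots> = of_real (qint p (Suc (n - 2)) (G * zw_poly p d))"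
    unfolding Q_def is_hn_nceval_Qsum unfolding n p_def ..
  also have "qint p (Suc (n - 2)) (G * zw_poly p d) =
      p ^ (Suc (n - 2) * d) * qint p (Suc (n - 2)) (pcompose (G * zw_poly p d) [:0, p ^ d:])"
    using p poly_zw_poly_power[of p] by (intro qint_eq_scale_if_roots) auto
  also have "pcompose (G * zw_poly p d) [:0, p ^ d:] = P * (P * wz_poly p d)"
    using p by (simp add: G_def pcompose_mult pcompose_scale_scale pcompose_zw_poly_power
        power_one_over mult.assoc)
  also have "qint p (Suc (n - 2)) (P * (P * wz_poly p d)) = cval (n - 2) q (d + l) l"
    unfolding P_def p_def cval_eq_qint_norm using q_pos q_less_1
    by (intro qint_lqj_poly_norm) (auto simp: power_less_one_iff)
  also have "p ^ (Suc (n - 2) * d) * cval (n - 2) q (d + l) l = cval (n - 2) q l m"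
  proof -
    have m: "m = l + d"
      using assms by (simp add: d_def)
    show ?thesis
      unfolding p_def m cval_shift by (simp add: add.commute)
  qed
  finally show ?thesis .
qed

end

theorem proposition3p3p2:
  fixes q :: real and n l m :: nat and h :: "ncp \<Rightarrow> complex"
  assumes "0 < q" and "q < 1" and "2 \<le> n" and "is_hn q n h"
  shows "h (ncmul (ncstar (qdisk n q l m)) (qdisk n q l m)) = of_real (cval (n - 2) q l m)"
  using is_hn_qdisk_norm_le[OF assms] is_hn_qdisk_norm_less[OF assms] by (cases "m \<le> l") auto

end
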